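(* Let $V$ be a $(\mathfrak g,K)$-module. For integers $h\equiv p\bmod2$, $p\ge0$, define on $V_{h,p,p}$ the operators $S^{3}_{1}=Z_{31}$, $S^{-3}_{1}=Z_{23}$, $S^{3}_{-1}=Z_{32}+\frac1{2(p+1)}Z_{12}Z_{31}$, $S^{-3}_{-1}=Z_{13}-\frac1{2(p+1)}Z_{12}Z_{23}$. Then $S^3_1$ maps $V_{h,p,p}$ into $V_{h+3,p+1,p+1}$, $S^{-3}_1$ maps it into $V_{h-3,p+1,p+1}$, $S^3_{-1}$ into $V_{h+3,p-1,p-1}$ and $S^{-3}_{-1}$ into $V_{h-3,p-1,p-1}$. Moreover $S^3_1$ and $S^{-3}_1$ commute, and $S^{3}_{-1}$ and $S^{-3}_{-1}$ commute (as compositions between highest weight spaces).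
   Context: $G=\mathrm{SU}(2,1)=\{g\in\mathrm{SL}_3(\mathbb C):\bar g^tI_{2,1}g=I_{2,1}\}$, $I_{2,1}=\mathrm{diag}(1,1,-1)$, with Lie algebra $\mathfrak g$ whose complexification is identified with $\mathfrak{sl}_3(\mathbb C)$; $E_{ij}$ denotes the matrix unit. $K=\{k(\eta,\alpha,\beta)\}$, $k(\eta,\alpha,\beta)=\begin{pmatrix}\eta\alpha&\eta\beta&0\\-\eta\bar\beta&\eta\bar\alpha&0\\0&0&\eta^{-2}\end{pmatrix}$ ($|\eta|=1,|\alpha|^2+|\beta|^2=1$). Irreducible representations of $K$: $\tau^h_p$ ($p\ge0$, $h\equiv p\bmod2$), $\tau^h_p(k(\eta,\alpha,\beta))=\eta^{-h}\tau_p\begin{pmatrix}\alpha&\beta\\-\bar\beta&\bar\alpha\end{pmatrix}$, $\tau_p$ the $(p+1)$-dim. irreducible representation of $\mathrm{SU}(2)$. A $(\mathfrak g,K)$-module has compatible actions of $\mathfrak g$ (extended complex-linearly to $\mathfrak{sl}_3(\mathbb C)$) and $K$, all vectors $K$-finite. $V_{h,p}$ is the $\tau^h_p$-isotypic subspace, and $V_{h,p,p}=\{v\in V_{h,p}:W_0v=-ipv\}$ with $W_0=\mathrm{diag}(i,-i,0)$ ($V_{h,p,p}=0$ if $p<0$). Elements of $\mathfrak{sl}_3(\mathbb C)$: $Z_{12}=2E_{12}$, $Z_{21}=-2E_{21}$, $Z_{13}=E_{13}$, $Z_{31}=E_{31}$, $Z_{23}=E_{23}$, $Z_{32}=E_{32}$.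 *)

theory Defs
  imports "HOL-Analysis.Analysis"
begin

type_synonym cmat = "complex^3^3"

definition Emat :: "3 \<Rightarrow> 3 \<Rightarrow> cmat" where
  "Emat i j = (\<chi> a b. if a = i \<and> b = j then 1 else 0)"

definition msc :: "complex \<Rightarrow> cmat \<Rightarrow> cmat" (infixr "*m" 75) where
  "c *m X = (\<chi> i j. c * X $ i $ j)"

definition mtrace :: "cmat \<Rightarrow> complex" where
  "mtrace X = (\<Sum>i\<in>UNIV. X $ i $ i)"

definition sl3 :: "cmat set" where
  "sl3 = {X. mtrace X = 0}"

definition kmat :: "complex \<Rightarrow> complex \<Rightarrow> complex \<Rightarrow> cmat" where
  "kmat \<eta> \<alpha> \<beta> = (\<eta> * \<alpha>) *m Emat 1 1 + (\<eta> * \<beta>) *m Emat 1 2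
      + (- \<eta> * cnj \<beta>) *m Emat 2 1 + (\<eta> * cnj \<alpha>) *m Emat 2 2
      + inverse (\<eta>^2) *m Emat 3 3"

definition Kgrp :: "cmat set" where
  "Kgrp = {kmat \<eta> \<alpha> \<beta> | \<eta> \<alpha> \<beta>. cmod \<eta> = 1 \<and> (cmod \<alpha>)^2 + (cmod \<beta>)^2 = 1}"

definition W0 :: cmat where "W0 = \<i> *m Emat 1 1 + (- \<i>) *m Emat 2 2"
definition Z12 :: cmat where "Z12 = 2 *m Emat 1 2"
definition Z21 :: cmat where "Z21 = (-2) *m Emat 2 1"
definition Z13 :: cmat where "Z13 = Emat 1 3"
definition Z31 :: cmat where "Z31 = Emat 3 1"
definition Z23 :: cmat where "Z23 = Emat 2 3"
definition Z32 :: cmat where "Z32 = Emat 3 2"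

section \<open>Complex vector spaces as real normed spaces with a complex structure J\<close>

definition cscale :: "('v::real_vector \<Rightarrow> 'v) \<Rightarrow> complex \<Rightarrow> 'v \<Rightarrow> 'v" where
  "cscale J c v = Re c *\<^sub>R v + Im c *\<^sub>R J v"

definition clin :: "('v::real_vector \<Rightarrow> 'v) \<Rightarrow> ('v \<Rightarrow> 'v) \<Rightarrow> bool" where
  "clin J f \<longleftrightarrow> linear f \<and> (\<forall>v. f (J v) = J (f v))"

definition gK_module ::
  "('v::real_normed_vector \<Rightarrow> 'v) \<Rightarrow> (cmat \<Rightarrow> 'v \<Rightarrow> 'v) \<Rightarrow> (cmat \<Rightarrow> 'v \<Rightarrow> 'v) \<Rightarrow> bool" where
  "gK_module J gact kact \<longleftrightarrow>
     \<comment> \<open>complex structure\<close>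
     linear J \<and> (\<forall>v. J (J v) = - v) \<and>
     \<comment> \<open>representation of sl_3(C) = complexified Lie algebra\<close>
     (\<forall>X\<in>sl3. clin J (gact X)) \<and>
     (\<forall>X\<in>sl3. \<forall>Y\<in>sl3. \<forall>a b v.
        gact (a *m X + b *m Y) v = cscale J a (gact X v) + cscale J b (gact Y v)) \<and>
     (\<forall>X\<in>sl3. \<forall>Y\<in>sl3. \<forall>v.
        gact (X ** Y - Y ** X) v = gact X (gact Y v) - gact Y (gact X v)) \<and>
     \<comment> \<open>representation of K\<close>
     (\<forall>k\<in>Kgrp. clin J (kact k)) \<and>
     (\<forall>v. kact (mat 1) v = v) \<and>
     (\<forall>k1\<in>Kgrp. \<forall>k2\<in>Kgrp. \<forall>v. kact (k1 ** k2) v = kact k1 (kact k2 v)) \<and>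
     \<comment> \<open>compatibility with the adjoint action\<close>
     (\<forall>k\<in>Kgrp. \<forall>X\<in>sl3. \<forall>v.
        kact k (gact X v) = gact (k ** X ** matrix_inv k) (kact k v)) \<and>
     \<comment> \<open>K-finiteness\<close>
     (\<forall>v. \<exists>B. finite B \<and> v \<in> span B \<and> J ` span B \<subseteq> span B \<and>
                (\<forall>k\<in>Kgrp. kact k ` span B \<subseteq> span B)) \<and>
     \<comment> \<open>the K-action is differentiable, with differential the action of Lie(K)\<close>
     (\<forall>\<gamma> X v. (\<forall>t. \<gamma> t \<in> Kgrp) \<and> \<gamma> 0 = mat 1 \<and> (\<gamma> has_vector_derivative X) (at 0) \<longrightarrow>
        ((\<lambda>t. kact (\<gamma> t) v) has_vector_derivative gact X v) (at 0))"

text \<open>Model of tau_p: homogeneous polynomials of degree p in (z1,z2), with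
  (tau_p(u) f)(z) = f(z u) for the row vector z.\<close>

definition Ppoly :: "nat \<Rightarrow> (complex \<times> complex \<Rightarrow> complex) set" where
  "Ppoly p = {(\<lambda>z. \<Sum>j\<le>p. c j * fst z ^ j * snd z ^ (p - j)) | c. True}"

definition tau :: "complex \<Rightarrow> complex \<Rightarrow> (complex \<times> complex \<Rightarrow> complex) \<Rightarrow> (complex \<times> complex \<Rightarrow> complex)" where
  "tau \<alpha> \<beta> f = (\<lambda>z. f (\<alpha> * fst z - cnj \<beta> * snd z, \<beta> * fst z + cnj \<alpha> * snd z))"

definition Khom :: "('v::real_vector \<Rightarrow> 'v) \<Rightarrow> (cmat \<Rightarrow> 'v \<Rightarrow> 'v) \<Rightarrow> int \<Rightarrow> nat
                    \<Rightarrow> ((complex \<times> complex \<Rightarrow> complex) \<Rightarrow> 'v) set" where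
  "Khom J kact h p = {\<phi>.
     (\<forall>f\<in>Ppoly p. \<forall>g\<in>Ppoly p. \<forall>a b.
        \<phi> (\<lambda>z. a * f z + b * g z) = cscale J a (\<phi> f) + cscale J b (\<phi> g)) \<and>
     (\<forall>\<eta> \<alpha> \<beta>. cmod \<eta> = 1 \<and> (cmod \<alpha>)^2 + (cmod \<beta>)^2 = 1 \<longrightarrow>
        (\<forall>f\<in>Ppoly p. \<phi> (\<lambda>z. \<eta> powi (- h) * tau \<alpha> \<beta> f z) = kact (kmat \<eta> \<alpha> \<beta>) (\<phi> f)))}"

definition Viso :: "('v::real_vector \<Rightarrow> 'v) \<Rightarrow> (cmat \<Rightarrow> 'v \<Rightarrow> 'v) \<Rightarrow> int \<Rightarrow> nat \<Rightarrow> 'v set" where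
  "Viso J kact h p = span (\<Union>\<phi>\<in>Khom J kact h p. \<phi> ` Ppoly p)"

definition Vhpp :: "('v::real_vector \<Rightarrow> 'v) \<Rightarrow> (cmat \<Rightarrow> 'v \<Rightarrow> 'v) \<Rightarrow> (cmat \<Rightarrow> 'v \<Rightarrow> 'v)
                    \<Rightarrow> int \<Rightarrow> int \<Rightarrow> 'v set" where
  "Vhpp J gact kact h p = (if p < 0 then {0} else
     {v \<in> Viso J kact h (nat p). gact W0 v = cscale J (- \<i> * of_int p) v})"

definition S_3_1 :: "(cmat \<Rightarrow> 'v \<Rightarrow> 'v) \<Rightarrow> 'v \<Rightarrow> 'v" where
  "S_3_1 gact v = gact Z31 v"

definition S_m3_1 :: "(cmat \<Rightarrow> 'v \<Rightarrow> 'v) \<Rightarrow> 'v \<Rightarrow> 'v" where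
  "S_m3_1 gact v = gact Z23 v"

definition S_3_m1 :: "('v::real_vector \<Rightarrow> 'v) \<Rightarrow> (cmat \<Rightarrow> 'v \<Rightarrow> 'v) \<Rightarrow> int \<Rightarrow> 'v \<Rightarrow> 'v" where
  "S_3_m1 J gact p v = gact Z32 v + cscale J (1 / (2 * (of_int p + 1))) (gact Z12 (gact Z31 v))"

definition S_m3_m1 :: "('v::real_vector \<Rightarrow> 'v) \<Rightarrow> (cmat \<Rightarrow> 'v \<Rightarrow> 'v) \<Rightarrow> int \<Rightarrow> 'v \<Rightarrow> 'v" where
  "S_m3_m1 J gact p v = gact Z13 v - cscale J (1 / (2 * (of_int p + 1))) (gact Z12 (gact Z23 v))"

end

theory Submission
  imports Defs
begin

text \<open>A vector of \<open>V\<^sub>h\<^sub>,\<^sub>p\<^sub>,\<^sub>p\<close> is \<open>\<psi>(z\<^sub>2\<^sup>p)\<close> for a \<open>K\<close>-equivariant map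
  \<open>\<psi> : \<tau>\<^sup>h\<^sub>p \<rightarrow> V\<close>: the isotypic part is spanned by the vectors \<open>\<psi>(z\<^sub>1\<^sup>j z\<^sub>2\<^sup>p\<^sup>-\<^sup>j)\<close>,
  which have pairwise distinct \<open>W\<^sub>0\<close>-weights. The pairs \<open>(-Z\<^sub>3\<^sub>2, Z\<^sub>3\<^sub>1)\<close> and
  \<open>(Z\<^sub>1\<^sub>3, Z\<^sub>2\<^sub>3)\<close> transform under \<open>Ad(K)\<close> like the coordinates \<open>(z\<^sub>1, z\<^sub>2)\<close> of
  \<open>\<tau>\<^sup>\<plusminus>\<^sup>3\<^sub>1\<close>. Pairing them with the gradient of a polynomial, or with the coordinates
  multiplying it, turns \<open>\<psi>\<close> into \<open>K\<close>-equivariant maps from \<open>\<tau>\<^sup>h\<^sup>\<plusminus>\<^sup>3\<^sub>p\<^sub>+\<^sub>1\<close> and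
  \<open>\<tau>\<^sup>h\<^sup>\<plusminus>\<^sup>3\<^sub>p\<^sub>-\<^sub>1\<close>, whose values at \<open>z\<^sub>2\<^sup>p\<^sup>\<plusminus>\<^sup>1\<close> are nonzero multiples of the
  shift operators applied to \<open>\<psi>(z\<^sub>2\<^sup>p)\<close>; the correction term involving \<open>Z\<^sub>1\<^sub>2\<close> appears
  because differentiating the \<open>K\<close>-action gives \<open>Z\<^sub>1\<^sub>2 \<psi>(z\<^sub>2\<^sup>p) = 2p \<psi>(z\<^sub>1 z\<^sub>2\<^sup>p\<^sup>-\<^sup>1)\<close>.
  The commutation relations then follow from the brackets of \<open>sl\<^sub>3\<close> together with
  \<open>Z\<^sub>2\<^sub>1 v = 0\<close> and \<open>(E\<^sub>2\<^sub>2 - E\<^sub>1\<^sub>1) v = p v\<close> on \<open>V\<^sub>h\<^sub>,\<^sub>p\<^sub>,\<^sub>p\<close>.\<close>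

lemma cscale_add_left: "cscale J (a + b) v = cscale J a v + cscale J b v"
  by (simp add: cscale_def algebra_simps)

lemma cscale_diff_left: "cscale J (a - b) v = cscale J a v - cscale J b v"
  by (simp add: cscale_def algebra_simps)

lemma cscale_minus_left: "cscale J (- a) v = - cscale J a v"
  by (simp add: cscale_def algebra_simps)

lemma cscale_zero_left [simp]: "cscale J 0 v = 0"
  by (simp add: cscale_def)

lemma cscale_one [simp]: "cscale J 1 v = v"
  by (simp add: cscale_def)

lemma cscale_of_real [simp]: "cscale J (of_real r) v = r *\<^sub>R v"
  by (simp add: cscale_def)

lemma cscale_of_nat [simp]: "cscale J (of_nat n) v = real n *\<^sub>R v"
  by (simp add: cscale_def)

lemma cscale_of_real_mult: "cscale J (of_real r * c) v = r *\<^sub>R cscale J c v"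
  by (simp add: cscale_def algebra_simps)

lemma cscale_numeral [simp]: "cscale J (numeral n) v = numeral n *\<^sub>R v"
  by (simp add: cscale_def)

lemma clin_add: "clin J f \<Longrightarrow> f (x + y) = f x + f y"
  unfolding clin_def by (simp add: linear_add)

lemma clin_diff: "clin J f \<Longrightarrow> f (x - y) = f x - f y"
  unfolding clin_def by (simp add: linear_diff)

lemma clin_minus: "clin J f \<Longrightarrow> f (- x) = - f x"
  unfolding clin_def by (simp add: linear_neg)

lemma clin_zero: "clin J f \<Longrightarrow> f 0 = 0"
  unfolding clin_def by (simp add: linear_0)

lemma clin_scaleR: "clin J f \<Longrightarrow> f (r *\<^sub>R x) = r *\<^sub>R f x"
  unfolding clin_def by (simp add: linear_scale)

lemma clin_sum: "clin J f \<Longrightarrow> f (sum g S) = (\<Sum>i\<in>S. f (g i))"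
  unfolding clin_def by (simp add: linear_sum)

lemma clin_cscale: "clin J f \<Longrightarrow> f (cscale J c x) = cscale J c (f x)"
  unfolding clin_def cscale_def by (simp add: linear_add linear_scale)

lemmas clin_simps = clin_add clin_diff clin_minus clin_zero clin_scaleR clin_cscale

locale complex_structure =
  fixes J :: "'v::real_vector \<Rightarrow> 'v"
  assumes linear_J: "linear J" and J_J: "\<And>v. J (J v) = - v"
begin

lemma cscale_add_right: "cscale J c (x + y) = cscale J c x + cscale J c y"
  by (simp add: cscale_def algebra_simps linear_add[OF linear_J])

lemma cscale_diff_right: "cscale J c (x - y) = cscale J c x - cscale J c y"
  by (simp add: cscale_def algebra_simps linear_diff[OF linear_J])

lemma cscale_minus_right: "cscale J c (- x) = - cscale J c x"
  by (simp add: cscale_def algebra_simps linear_neg[OF linear_J])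

lemma cscale_zero_right [simp]: "cscale J c 0 = 0"
  by (simp add: cscale_def linear_0[OF linear_J])

lemma cscale_scaleR: "cscale J c (r *\<^sub>R x) = r *\<^sub>R cscale J c x"
  by (simp add: cscale_def algebra_simps linear_scale[OF linear_J])

lemma cscale_cscale [simp]: "cscale J a (cscale J b v) = cscale J (a * b) v"
  by (simp add: cscale_def algebra_simps linear_add[OF linear_J] linear_scale[OF linear_J] J_J)

lemma cscale_sum: "cscale J c (sum f S) = (\<Sum>i\<in>S. cscale J c (f i))"
  by (induction S rule: infinite_finite_induct) (simp_all add: cscale_add_right)

lemma eigenvector_sum_eq_zero:
  assumes T: "clin J T" and "finite F" "i \<notin> F" and "inj_on lam (insert i F)"
    and "\<And>j. j \<in> insert i F \<Longrightarrow> T (w j) = cscale J (lam j) (w j)"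
    and "T (w i + (\<Sum>j\<in>F. w j)) = cscale J (lam i) (w i + (\<Sum>j\<in>F. w j))"
  shows "(\<Sum>j\<in>F. w j) = 0"
  using assms(2-)
proof (induction F arbitrary: w rule: finite_induct)
  case empty
  then show ?case by simp
next
  case (insert x F)
  \<comment> \<open>Applying \<open>T - lam x\<close> kills \<open>w x\<close>; the rescaled remaining terms satisfy the hypotheses over \<open>F\<close>.\<close>
  let ?v = "w i + (\<Sum>j\<in>insert x F. w j)"
  define \<delta> where "\<delta> = lam i - lam x"
  have "x \<noteq> i" using insert.prems(1) by auto
  then have \<delta>: "\<delta> \<noteq> 0" using insert.prems(2) by (auto simp: \<delta>_def inj_on_def)
  define w' where "w' j = cscale J ((lam j - lam x) / \<delta>) (w j)" for j
  have "cscale J \<delta> ?v = T ?v - cscale J (lam x) ?v"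
    using insert.prems(4) by (simp add: \<delta>_def cscale_diff_left)
  also have "\<dots> = cscale J \<delta> (w i) + (\<Sum>j\<in>F. cscale J (lam j - lam x) (w j))"
    using insert.hyps insert.prems(3) \<open>x \<noteq> i\<close>
    by (simp add: clin_add[OF T] clin_sum[OF T] cscale_add_right cscale_sum \<delta>_def
        cscale_diff_left sum_subtractf algebra_simps)
  finally have "cscale J (inverse \<delta>) (cscale J \<delta> ?v) = w i + (\<Sum>j\<in>F. w' j)"
    using \<delta> by (simp add: cscale_add_right cscale_sum w'_def divide_inverse mult.commute)
  then have v: "?v = w i + (\<Sum>j\<in>F. w' j)"
    using \<delta> by simp
  have "w' i = w i"
    using \<delta> by (simp add: w'_def \<delta>_def)
  moreover have "T (w' j) = cscale J (lam j) (w' j)" if "j \<in> insert i F" for j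
  proof -
    have "T (w j) = cscale J (lam j) (w j)"
      using insert.prems(3) that by auto
    then show ?thesis
      by (simp add: w'_def clin_cscale[OF T] ac_simps)
  qed
  moreover have "inj_on lam (insert i F)"
    using insert.prems(2) by (rule inj_on_subset) auto
  ultimately have "(\<Sum>j\<in>F. w' j) = 0"
    using insert.prems(1,4) v by (intro insert.IH) auto
  then show ?case
    using v by simp
qed

end

lemma affine_scaleR_eq:
  fixes x y :: "'a::real_vector"
  assumes "r + 1 \<noteq> 0"
  shows "x + (1 / (r + 1)) *\<^sub>R (y - x) = (1 / (r + 1)) *\<^sub>R (r *\<^sub>R x + y)"
proof -
  have "(1 / (r + 1)) *\<^sub>R (r *\<^sub>R x + y) = (r / (r + 1)) *\<^sub>R x + (1 / (r + 1)) *\<^sub>R y"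
    by (simp add: scaleR_add_right)
  also have "r / (r + 1) = 1 - 1 / (r + 1)"
    using assms by (simp add: field_simps)
  finally show ?thesis
    by (simp add: scaleR_diff_left scaleR_diff_right)
qed

lemmas mat_simps = vec_eq_iff forall_3 msc_def Emat_def matrix_matrix_mult_def sum_3 mat_def

lemma Emat_mult: "Emat i j ** Emat k l = (if j = k then Emat i l else 0)"
proof -
  have "(\<Sum>x\<in>UNIV. (if a = i \<and> x = j then 1 else 0) * (if x = k \<and> b = l then 1 else (0::complex)))
     = (if j = k \<and> a = i \<and> b = l then 1 else 0)" for a b
    by (simp add: if_distrib[where f="\<lambda>x. x * _"] cong: if_cong)
  then show ?thesis by (auto simp: vec_eq_iff matrix_matrix_mult_def Emat_def)
qed

lemma sl3_iff: "X \<in> sl3 \<longleftrightarrow> X $ 1 $ 1 + X $ 2 $ 2 + X $ 3 $ 3 = 0"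
  by (simp add: sl3_def mtrace_def sum_3)

lemma sl3_Emat [simp]: "i \<noteq> j \<Longrightarrow> Emat i j \<in> sl3"
  by (auto simp: sl3_def mtrace_def Emat_def intro!: sum.neutral)

lemma sl3_msc: "X \<in> sl3 \<Longrightarrow> c *m X \<in> sl3"
  by (simp add: sl3_iff msc_def flip: ring_distribs)

lemma msc_minus_one: "(-1) *m X = - X"
  by (simp add: msc_def vec_eq_iff)

lemma msc_zero [simp]: "0 *m X = 0"
  by (simp add: msc_def vec_eq_iff)

lemma msc_one [simp]: "1 *m X = X"
  by (simp add: msc_def vec_eq_iff)

lemma sl3_uminus: "X \<in> sl3 \<Longrightarrow> - X \<in> sl3"
  using sl3_msc[of X "-1"] by (simp add: msc_minus_one)

lemma sl3_lincomb:
  assumes "X \<in> sl3" "Y \<in> sl3"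
  shows "a *m X + b *m Y \<in> sl3"
proof -
  have "(a *m X + b *m Y) $ 1 $ 1 + (a *m X + b *m Y) $ 2 $ 2 + (a *m X + b *m Y) $ 3 $ 3
      = a * (X $ 1 $ 1 + X $ 2 $ 2 + X $ 3 $ 3) + b * (Y $ 1 $ 1 + Y $ 2 $ 2 + Y $ 3 $ 3)"
    by (simp add: msc_def algebra_simps)
  then show ?thesis
    using assms by (simp add: sl3_iff)
qed

lemma sl3_W0: "W0 \<in> sl3"
  by (simp add: sl3_iff W0_def msc_def Emat_def)

lemma msc_has_vector_derivative:
  "(f has_vector_derivative f') F \<Longrightarrow> ((\<lambda>t. f t *m X) has_vector_derivative (f' *m X)) F"
proof -
  have "linear (\<lambda>c. c *m X)"
    by (rule linearI) (simp_all add: msc_def vec_eq_iff algebra_simps)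
  then show "(f has_vector_derivative f') F \<Longrightarrow> ((\<lambda>t. f t *m X) has_vector_derivative (f' *m X)) F"
    by (rule bounded_linear.has_vector_derivative[OF linear_conv_bounded_linear[THEN iffD1]])
qed

lemma kmat_1_has_vector_derivative:
  assumes "(\<alpha> has_vector_derivative \<alpha>') (at 0)" "(\<beta> has_vector_derivative \<beta>') (at 0)"
  shows "((\<lambda>t. kmat 1 (\<alpha> t) (\<beta> t)) has_vector_derivative
     (\<alpha>' *m Emat 1 1 + \<beta>' *m Emat 1 2 + (- cnj \<beta>') *m Emat 2 1 + cnj \<alpha>' *m Emat 2 2)) (at 0)"
proof -
  have "((\<lambda>t. \<alpha> t *m Emat 1 1 + \<beta> t *m Emat 1 2 + (- cnj (\<beta> t)) *m Emat 2 1 + cnj (\<alpha> t) *m Emat 2 2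
        + 1 *m Emat 3 3) has_vector_derivative
      (\<alpha>' *m Emat 1 1 + \<beta>' *m Emat 1 2 + (- cnj \<beta>') *m Emat 2 1 + cnj \<alpha>' *m Emat 2 2 + 0)) (at 0)"
    by (intro has_vector_derivative_add msc_has_vector_derivative has_vector_derivative_minus
        has_vector_derivative_cnj assms has_vector_derivative_const)
  then show ?thesis
    by (simp add: kmat_def)
qed

lemma Kgrp_kmat: "cmod \<eta> = 1 \<Longrightarrow> (cmod \<alpha>)\<^sup>2 + (cmod \<beta>)\<^sup>2 = 1 \<Longrightarrow> kmat \<eta> \<alpha> \<beta> \<in> Kgrp"
  unfolding Kgrp_def by blast

lemma kmat_1_1_0: "kmat 1 1 0 = mat 1"
  by (auto simp: kmat_def mat_simps)

lemma unit_mult_cnj: "cmod \<eta> = 1 \<Longrightarrow> \<eta> * cnj \<eta> = 1"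
  using complex_norm_square[of \<eta>] by simp

lemma unit_pair_mult_cnj: "(cmod \<alpha>)\<^sup>2 + (cmod \<beta>)\<^sup>2 = 1 \<Longrightarrow> \<alpha> * cnj \<alpha> + \<beta> * cnj \<beta> = 1"
  using complex_norm_square[of \<alpha>] complex_norm_square[of \<beta>] by (metis of_real_1 of_real_add)

lemma unit_powi_minus: "cmod \<eta> = 1 \<Longrightarrow> \<eta> powi (- int n) = cnj \<eta> ^ n"
  using inverse_unique[OF unit_mult_cnj, of \<eta>] by (simp add: power_int_minus flip: power_inverse)

lemma matrix_inv_kmat:
  assumes "cmod \<eta> = 1" "(cmod \<alpha>)\<^sup>2 + (cmod \<beta>)\<^sup>2 = 1"
  shows "matrix_inv (kmat \<eta> \<alpha> \<beta>) = kmat (cnj \<eta>) (cnj \<alpha>) (- \<beta>)"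
proof -
  let ?k = "kmat \<eta> \<alpha> \<beta>" and ?k' = "kmat (cnj \<eta>) (cnj \<alpha>) (- \<beta>)"
  have \<eta>: "cnj \<eta> = inverse \<eta>" "\<eta> \<noteq> 0"
    using unit_mult_cnj[OF assms(1)] by (auto simp: inverse_unique)
  have inv: "?k ** ?k' = mat 1" "?k' ** ?k = mat 1"
    using unit_pair_mult_cnj[OF assms(2)] \<eta>
    by (simp_all add: \<eta> kmat_def mat_simps field_simps; algebra)+
  show ?thesis
    unfolding matrix_inv_def
  proof (rule some_equality)
    fix B assume B: "?k ** B = mat 1 \<and> B ** ?k = mat 1"
    have "B = (B ** ?k) ** ?k'"
      by (simp add: matrix_mul_assoc[symmetric] inv matrix_mul_rid)
    then show "B = ?k'"
      using B by (simp add: matrix_mul_lid)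
  qed (use inv in simp)
qed

lemma kmat_conj_Emat:
  assumes "cmod \<eta> = 1"
  shows "kmat \<eta> \<alpha> \<beta> ** Emat 3 1 ** kmat (cnj \<eta>) (cnj \<alpha>) (- \<beta>)
       = (cnj \<eta> ^ 3 * cnj \<alpha>) *m Emat 3 1 + (- (cnj \<eta> ^ 3 * \<beta>)) *m Emat 3 2"
    and "kmat \<eta> \<alpha> \<beta> ** Emat 3 2 ** kmat (cnj \<eta>) (cnj \<alpha>) (- \<beta>)
       = (cnj \<eta> ^ 3 * cnj \<beta>) *m Emat 3 1 + (cnj \<eta> ^ 3 * \<alpha>) *m Emat 3 2"
    and "kmat \<eta> \<alpha> \<beta> ** Emat 1 3 ** kmat (cnj \<eta>) (cnj \<alpha>) (- \<beta>)
       = (\<eta> ^ 3 * \<alpha>) *m Emat 1 3 + (- (\<eta> ^ 3 * cnj \<beta>)) *m Emat 2 3"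
    and "kmat \<eta> \<alpha> \<beta> ** Emat 2 3 ** kmat (cnj \<eta>) (cnj \<alpha>) (- \<beta>)
       = (\<eta> ^ 3 * \<beta>) *m Emat 1 3 + (\<eta> ^ 3 * cnj \<alpha>) *m Emat 2 3"
proof -
  have \<eta>: "cnj \<eta> = inverse \<eta>" "\<eta> \<noteq> 0"
    using unit_mult_cnj[OF assms] by (auto simp: inverse_unique)
  show "kmat \<eta> \<alpha> \<beta> ** Emat 3 1 ** kmat (cnj \<eta>) (cnj \<alpha>) (- \<beta>)
       = (cnj \<eta> ^ 3 * cnj \<alpha>) *m Emat 3 1 + (- (cnj \<eta> ^ 3 * \<beta>)) *m Emat 3 2"
    and "kmat \<eta> \<alpha> \<beta> ** Emat 3 2 ** kmat (cnj \<eta>) (cnj \<alpha>) (- \<beta>)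
       = (cnj \<eta> ^ 3 * cnj \<beta>) *m Emat 3 1 + (cnj \<eta> ^ 3 * \<alpha>) *m Emat 3 2"
    and "kmat \<eta> \<alpha> \<beta> ** Emat 1 3 ** kmat (cnj \<eta>) (cnj \<alpha>) (- \<beta>)
       = (\<eta> ^ 3 * \<alpha>) *m Emat 1 3 + (- (\<eta> ^ 3 * cnj \<beta>)) *m Emat 2 3"
    and "kmat \<eta> \<alpha> \<beta> ** Emat 2 3 ** kmat (cnj \<eta>) (cnj \<alpha>) (- \<beta>)
       = (\<eta> ^ 3 * \<beta>) *m Emat 1 3 + (\<eta> ^ 3 * cnj \<alpha>) *m Emat 2 3"
    using \<eta> by (simp_all add: \<eta> kmat_def mat_simps field_simps power2_eq_square power3_eq_cube)
qed


section \<open>Homogeneous polynomials in two variables\<close>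

definition hpoly :: "nat \<Rightarrow> (nat \<Rightarrow> complex) \<Rightarrow> complex \<times> complex \<Rightarrow> complex" where
  "hpoly n c = (\<lambda>z. \<Sum>j\<le>n. c j * fst z ^ j * snd z ^ (n - j))"

definition zmonom :: "nat \<Rightarrow> nat \<Rightarrow> complex \<times> complex \<Rightarrow> complex" where
  "zmonom n j = (\<lambda>z. fst z ^ j * snd z ^ (n - j))"

lemma Ppoly_iff: "F \<in> Ppoly n \<longleftrightarrow> (\<exists>c. F = hpoly n c)"
  by (simp add: Ppoly_def hpoly_def)

lemma hpoly_in_Ppoly [simp]: "hpoly n c \<in> Ppoly n"
  by (auto simp: Ppoly_iff)

lemma zmonom_eq_hpoly: "j \<le> n \<Longrightarrow> zmonom n j = hpoly n (\<lambda>i. if i = j then 1 else 0)"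
  by (simp add: zmonom_def hpoly_def if_distrib[where f="\<lambda>x. x * _"] cong: if_cong)

lemma zmonom_in_Ppoly: "j \<le> n \<Longrightarrow> zmonom n j \<in> Ppoly n"
  by (simp add: zmonom_eq_hpoly)

lemma hpoly_lincomb: "(\<lambda>z. a * hpoly n c z + b * hpoly n d z) = hpoly n (\<lambda>j. a * c j + b * d j)"
  by (simp add: hpoly_def fun_eq_iff sum_distrib_left sum.distrib[symmetric] algebra_simps)

lemma hpoly_scale: "(\<lambda>z. a * hpoly n c z) = hpoly n (\<lambda>j. a * c j)"
  by (simp add: hpoly_def fun_eq_iff sum_distrib_left algebra_simps)

lemma hpoly_zero: "hpoly n (\<lambda>j. 0) = (\<lambda>z. 0)"
  by (simp add: hpoly_def)

lemma Ppoly_lincomb: "f \<in> Ppoly n \<Longrightarrow> g \<in> Ppoly n \<Longrightarrow> (\<lambda>z. a * f z + b * g z) \<in> Ppoly n"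
  by (auto simp: Ppoly_iff hpoly_lincomb)

lemma Ppoly_zero: "(\<lambda>z. 0) \<in> Ppoly n"
  using hpoly_in_Ppoly[of n "\<lambda>j. 0"] by (simp add: hpoly_zero)

lemma Ppoly_mult_snd: "F \<in> Ppoly m \<Longrightarrow> (\<lambda>z. snd z * F z) \<in> Ppoly (Suc m)"
proof -
  assume "F \<in> Ppoly m"
  then obtain c where F: "F = hpoly m c" by (auto simp: Ppoly_iff)
  have "(\<lambda>z. snd z * F z) = hpoly (Suc m) (\<lambda>j. if j \<le> m then c j else 0)"
    unfolding F hpoly_def
    by (rule ext, simp only: sum.atMost_Suc)
      (auto simp: sum_distrib_left Suc_diff_le mult_ac intro!: sum.cong)
  then show ?thesis by simp
qed

lemma Ppoly_mult_fst: "F \<in> Ppoly m \<Longrightarrow> (\<lambda>z. fst z * F z) \<in> Ppoly (Suc m)"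
proof -
  assume "F \<in> Ppoly m"
  then obtain c where F: "F = hpoly m c" by (auto simp: Ppoly_iff)
  have "(\<lambda>z. fst z * F z) = hpoly (Suc m) (\<lambda>j. if j = 0 then 0 else c (j - 1))"
    unfolding F hpoly_def
    by (rule ext, simp only: sum.atMost_Suc_shift) (auto simp: sum_distrib_left mult_ac intro!: sum.cong)
  then show ?thesis by simp
qed

lemma snd_mult_zmonom: "(\<lambda>z. snd z * zmonom m 0 z) = zmonom (Suc m) 0"
  by (simp add: zmonom_def fun_eq_iff)

lemma fst_mult_zmonom: "(\<lambda>z. fst z * zmonom m 0 z) = zmonom (Suc m) 1"
  by (simp add: zmonom_def fun_eq_iff)

definition partial1 :: "(complex \<times> complex \<Rightarrow> complex) \<Rightarrow> complex \<times> complex \<Rightarrow> complex" where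
  "partial1 F = (\<lambda>z. deriv (\<lambda>s. F (s, snd z)) (fst z))"

definition partial2 :: "(complex \<times> complex \<Rightarrow> complex) \<Rightarrow> complex \<times> complex \<Rightarrow> complex" where
  "partial2 F = (\<lambda>z. deriv (\<lambda>s. F (fst z, s)) (snd z))"

text \<open>The truncated exponents \<open>j - 1\<close> and \<open>n - j - 1\<close> only occur in terms with a
  vanishing factor.\<close>

definition hpoly_d1 :: "nat \<Rightarrow> (nat \<Rightarrow> complex) \<Rightarrow> complex \<times> complex \<Rightarrow> complex" where
  "hpoly_d1 n c = (\<lambda>z. \<Sum>j\<le>n. c j * of_nat j * fst z ^ (j - 1) * snd z ^ (n - j))"

definition hpoly_d2 :: "nat \<Rightarrow> (nat \<Rightarrow> complex) \<Rightarrow> complex \<times> complex \<Rightarrow> complex" where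
  "hpoly_d2 n c = (\<lambda>z. \<Sum>j\<le>n. c j * of_nat (n - j) * fst z ^ j * snd z ^ (n - j - 1))"

lemma hpoly_affine_has_field_derivative:
  "((\<lambda>s. hpoly n c (a1 * s + b1, a2 * s + b2)) has_field_derivative
     a1 * hpoly_d1 n c (a1 * s0 + b1, a2 * s0 + b2) + a2 * hpoly_d2 n c (a1 * s0 + b1, a2 * s0 + b2))
   (at s0)"
proof -
  have "((\<lambda>s. \<Sum>j\<le>n. c j * (a1 * s + b1) ^ j * (a2 * s + b2) ^ (n - j)) has_field_derivative
    (\<Sum>j\<le>n. c j * (of_nat j * (a1 * s0 + b1) ^ (j - 1) * a1 * (a2 * s0 + b2) ^ (n - j)
        + (a1 * s0 + b1) ^ j * (of_nat (n - j) * (a2 * s0 + b2) ^ (n - j - 1) * a2)))) (at s0)"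
    by (intro DERIV_sum) (auto intro!: derivative_eq_intros simp: algebra_simps)
  moreover have "(\<Sum>j\<le>n. c j * (of_nat j * (a1 * s0 + b1) ^ (j - 1) * a1 * (a2 * s0 + b2) ^ (n - j)
        + (a1 * s0 + b1) ^ j * (of_nat (n - j) * (a2 * s0 + b2) ^ (n - j - 1) * a2)))
      = a1 * hpoly_d1 n c (a1 * s0 + b1, a2 * s0 + b2) + a2 * hpoly_d2 n c (a1 * s0 + b1, a2 * s0 + b2)"
    unfolding hpoly_d1_def hpoly_d2_def sum_distrib_left sum.distrib[symmetric]
    by (intro sum.cong refl) (simp add: algebra_simps)
  ultimately show ?thesis
    by (simp add: hpoly_def)
qed

lemma partial1_hpoly: "partial1 (hpoly n c) = hpoly_d1 n c"
proof
  fix z :: "complex \<times> complex"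
  show "partial1 (hpoly n c) z = hpoly_d1 n c z"
    using DERIV_imp_deriv[OF hpoly_affine_has_field_derivative[of n c 1 0 0 "snd z" "fst z"]]
    by (simp add: partial1_def)
qed

lemma partial2_hpoly: "partial2 (hpoly n c) = hpoly_d2 n c"
proof
  fix z :: "complex \<times> complex"
  show "partial2 (hpoly n c) z = hpoly_d2 n c z"
    using DERIV_imp_deriv[OF hpoly_affine_has_field_derivative[of n c 0 "fst z" 1 0 "snd z"]]
    by (simp add: partial2_def)
qed

lemma hpoly_d1_Suc: "hpoly_d1 (Suc p) c = hpoly p (\<lambda>j. c (Suc j) * of_nat (Suc j))"
  unfolding hpoly_d1_def hpoly_def by (simp only: sum.atMost_Suc_shift) (simp add: mult_ac)

lemma hpoly_d2_Suc: "hpoly_d2 (Suc p) c = hpoly p (\<lambda>j. c j * of_nat (Suc p - j))"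
  unfolding hpoly_d2_def hpoly_def
  by (rule ext, simp only: sum.atMost_Suc) (auto intro!: sum.cong simp: Suc_diff_le mult_ac)

lemma partial1_Ppoly: "F \<in> Ppoly (Suc p) \<Longrightarrow> partial1 F \<in> Ppoly p"
  by (auto simp: Ppoly_iff partial1_hpoly hpoly_d1_Suc)

lemma partial2_Ppoly: "F \<in> Ppoly (Suc p) \<Longrightarrow> partial2 F \<in> Ppoly p"
  by (auto simp: Ppoly_iff partial2_hpoly hpoly_d2_Suc)

lemma partial1_lincomb:
  "F \<in> Ppoly (Suc p) \<Longrightarrow> G \<in> Ppoly (Suc p) \<Longrightarrow>
    partial1 (\<lambda>z. a * F z + b * G z) = (\<lambda>z. a * partial1 F z + b * partial1 G z)"
  by (auto simp: Ppoly_iff partial1_hpoly hpoly_d1_Suc hpoly_lincomb algebra_simps)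

lemma partial2_lincomb:
  "F \<in> Ppoly (Suc p) \<Longrightarrow> G \<in> Ppoly (Suc p) \<Longrightarrow>
    partial2 (\<lambda>z. a * F z + b * G z) = (\<lambda>z. a * partial2 F z + b * partial2 G z)"
  by (auto simp: Ppoly_iff partial2_hpoly hpoly_d2_Suc hpoly_lincomb algebra_simps)

lemma partial1_tau:
  assumes "F \<in> Ppoly n"
  shows "partial1 (\<lambda>z. \<kappa> * tau \<alpha> \<beta> F z)
    = (\<lambda>z. \<kappa> * (\<alpha> * tau \<alpha> \<beta> (partial1 F) z + \<beta> * tau \<alpha> \<beta> (partial2 F) z))"
proof
  fix z :: "complex \<times> complex"
  obtain c where F: "F = hpoly n c" using assms by (auto simp: Ppoly_iff)
  have "partial1 (\<lambda>z. \<kappa> * tau \<alpha> \<beta> F z) z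
      = deriv (\<lambda>s. \<kappa> * hpoly n c (\<alpha> * s + - cnj \<beta> * snd z, \<beta> * s + cnj \<alpha> * snd z)) (fst z)"
    by (simp add: partial1_def F tau_def)
  also have "\<dots> = \<kappa> * (\<alpha> * hpoly_d1 n c (\<alpha> * fst z + - cnj \<beta> * snd z, \<beta> * fst z + cnj \<alpha> * snd z)
      + \<beta> * hpoly_d2 n c (\<alpha> * fst z + - cnj \<beta> * snd z, \<beta> * fst z + cnj \<alpha> * snd z))"
    by (rule DERIV_imp_deriv[OF DERIV_cmult[OF hpoly_affine_has_field_derivative]])
  also have "\<dots> = \<kappa> * (\<alpha> * tau \<alpha> \<beta> (partial1 F) z + \<beta> * tau \<alpha> \<beta> (partial2 F) z)"
    by (simp add: F partial1_hpoly partial2_hpoly tau_def)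
  finally show "partial1 (\<lambda>z. \<kappa> * tau \<alpha> \<beta> F z) z
      = \<kappa> * (\<alpha> * tau \<alpha> \<beta> (partial1 F) z + \<beta> * tau \<alpha> \<beta> (partial2 F) z)" .
qed

lemma partial2_tau:
  assumes "F \<in> Ppoly n"
  shows "partial2 (\<lambda>z. \<kappa> * tau \<alpha> \<beta> F z)
    = (\<lambda>z. \<kappa> * (- cnj \<beta> * tau \<alpha> \<beta> (partial1 F) z + cnj \<alpha> * tau \<alpha> \<beta> (partial2 F) z))"
proof
  fix z :: "complex \<times> complex"
  obtain c where F: "F = hpoly n c" using assms by (auto simp: Ppoly_iff)
  have "partial2 (\<lambda>z. \<kappa> * tau \<alpha> \<beta> F z) z
      = deriv (\<lambda>s. \<kappa> * hpoly n c (- cnj \<beta> * s + \<alpha> * fst z, cnj \<alpha> * s + \<beta> * fst z)) (snd z)"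
    by (simp add: partial2_def F tau_def algebra_simps)
  also have "\<dots> = \<kappa> * (- cnj \<beta> * hpoly_d1 n c (- cnj \<beta> * snd z + \<alpha> * fst z, cnj \<alpha> * snd z + \<beta> * fst z)
      + cnj \<alpha> * hpoly_d2 n c (- cnj \<beta> * snd z + \<alpha> * fst z, cnj \<alpha> * snd z + \<beta> * fst z))"
    by (rule DERIV_imp_deriv[OF DERIV_cmult[OF hpoly_affine_has_field_derivative]])
  also have "\<dots> = \<kappa> * (- cnj \<beta> * tau \<alpha> \<beta> (partial1 F) z + cnj \<alpha> * tau \<alpha> \<beta> (partial2 F) z)"
    by (simp add: F partial1_hpoly partial2_hpoly tau_def algebra_simps)
  finally show "partial2 (\<lambda>z. \<kappa> * tau \<alpha> \<beta> F z) z
      = \<kappa> * (- cnj \<beta> * tau \<alpha> \<beta> (partial1 F) z + cnj \<alpha> * tau \<alpha> \<beta> (partial2 F) z)" .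
qed

lemma partial1_zmonom: "partial1 (zmonom (Suc n) 0) = (\<lambda>z. 0)"
  by (simp add: zmonom_eq_hpoly partial1_hpoly hpoly_d1_Suc hpoly_zero)

lemma partial2_zmonom: "partial2 (zmonom (Suc n) 0) = (\<lambda>z. of_nat (Suc n) * zmonom n 0 z)"
proof -
  have "partial2 (zmonom (Suc n) 0) = hpoly n (\<lambda>j. of_nat (Suc n) * (if j = 0 then 1 else 0))"
    unfolding zmonom_eq_hpoly[of 0 "Suc n", simplified] partial2_hpoly hpoly_d2_Suc
    by (rule arg_cong[where f="hpoly n"]) auto
  also have "\<dots> = (\<lambda>z. of_nat (Suc n) * zmonom n 0 z)"
    by (simp only: zmonom_eq_hpoly[of 0 n, simplified] hpoly_scale)
  finally show ?thesis .
qed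

lemma binomial_trig_has_vector_derivative:
  fixes w :: "nat \<Rightarrow> 'v::real_normed_vector"
  shows "((\<lambda>t. \<Sum>k\<le>n. (real (n choose k) * sin t ^ k * cos t ^ (n - k)) *\<^sub>R w k)
    has_vector_derivative (real n *\<^sub>R w 1)) (at 0)"
proof -
  have coeff: "((\<lambda>t. real (n choose k) * sin t ^ k * cos t ^ (n - k))
      has_real_derivative (if k = 1 then real n else 0)) (at 0)" for k
  proof -
    have "((\<lambda>t. real (n choose k) * sin t ^ k * cos t ^ (n - k)) has_real_derivative
       real (n choose k) * (real k * sin 0 ^ (k - 1) * cos 0) * cos 0 ^ (n - k)
       + real (n choose k) * sin 0 ^ k * (real (n - k) * cos 0 ^ (n - k - 1) * (- sin 0))) (at 0)"
      by (auto intro!: derivative_eq_intros simp: algebra_simps)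
    then show ?thesis
      by (cases k) (auto simp: power_0_left)
  qed
  have "((\<lambda>t. \<Sum>k\<le>n. (real (n choose k) * sin t ^ k * cos t ^ (n - k)) *\<^sub>R w k) has_vector_derivative
     (\<Sum>k\<le>n. (real (n choose k) * sin 0 ^ k * cos 0 ^ (n - k)) *\<^sub>R 0
        + (if k = 1 then real n else 0) *\<^sub>R w k)) (at 0)"
    by (intro has_vector_derivative_sum has_vector_derivative_scaleR coeff has_vector_derivative_const)
  moreover have "(\<Sum>k\<le>n. (real (n choose k) * sin 0 ^ k * cos 0 ^ (n - k)) *\<^sub>R 0
      + (if k = 1 then real n else 0) *\<^sub>R w k) = real n *\<^sub>R w 1"
    by (cases n) (auto simp: if_distrib[where f="\<lambda>x. x *\<^sub>R _"] sum.delta cong: if_cong)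
  ultimately show ?thesis
    by simp
qed

lemma snd_mult_tau:
  assumes "\<alpha> * cnj \<alpha> + \<beta> * cnj \<beta> = 1"
  shows "snd z * (\<kappa> * c * tau \<alpha> \<beta> f z)
    = \<kappa> * tau \<alpha> \<beta> (\<lambda>z. (c * \<alpha>) * (snd z * f z) + (- (c * \<beta>)) * (fst z * f z)) z"
  unfolding tau_def fst_conv snd_conv using assms by algebra

lemma fst_mult_tau:
  assumes "\<alpha> * cnj \<alpha> + \<beta> * cnj \<beta> = 1"
  shows "fst z * (\<kappa> * c * tau \<alpha> \<beta> f z)
    = \<kappa> * tau \<alpha> \<beta> (\<lambda>z. (c * cnj \<alpha>) * (fst z * f z) + (c * cnj \<beta>) * (snd z * f z)) z"
  unfolding tau_def fst_conv snd_conv using assms by algebra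

lemma power_int_minus_add: "(\<eta> :: 'a :: field) \<noteq> 0 \<Longrightarrow> \<eta> powi (- (h + d)) = \<eta> powi (- h) * \<eta> powi (- d)"
  by (simp add: power_int_add[symmetric])

lemma inj_on_zmonom_weights: "inj_on (\<lambda>j. \<i> * (of_nat j - of_nat (n - j) :: complex)) {..n}"
proof (rule inj_onI)
  fix j k assume "j \<in> {..n}" "k \<in> {..n}" "\<i> * (of_nat j - of_nat (n - j)) = \<i> * (of_nat k - of_nat (n - k) :: complex)"
  then have "(of_nat (2 * j) :: complex) = of_nat (2 * k)"
    by (simp add: of_nat_diff algebra_simps)
  then show "j = k"
    by simp
qed

locale gK_mod =
  fixes J :: "'v::real_normed_vector \<Rightarrow> 'v" and gact kact :: "cmat \<Rightarrow> 'v \<Rightarrow> 'v"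
  assumes gK_module: "gK_module J gact kact"

sublocale gK_mod \<subseteq> complex_structure J
  by (rule complex_structure.intro) (use gK_module in \<open>simp_all add: gK_module_def\<close>)

context gK_mod
begin

abbreviation E :: "3 \<Rightarrow> 3 \<Rightarrow> 'v \<Rightarrow> 'v" where
  "E i j \<equiv> gact (Emat i j)"

lemma gact_clin: "X \<in> sl3 \<Longrightarrow> clin J (gact X)"
  using gK_module by (simp add: gK_module_def)

lemma gact_lincomb:
  "X \<in> sl3 \<Longrightarrow> Y \<in> sl3 \<Longrightarrow> gact (a *m X + b *m Y) v = cscale J a (gact X v) + cscale J b (gact Y v)"
  using gK_module by (simp add: gK_module_def)

lemma gact_bracket:
  "X \<in> sl3 \<Longrightarrow> Y \<in> sl3 \<Longrightarrow> gact (X ** Y - Y ** X) v = gact X (gact Y v) - gact Y (gact X v)"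
  using gK_module by (simp add: gK_module_def)

lemma kact_clin: "k \<in> Kgrp \<Longrightarrow> clin J (kact k)"
  using gK_module by (simp add: gK_module_def)

lemma kact_gact: "k \<in> Kgrp \<Longrightarrow> X \<in> sl3 \<Longrightarrow> kact k (gact X v) = gact (k ** X ** matrix_inv k) (kact k v)"
  using gK_module by (simp add: gK_module_def)

lemma gact_eq_derivative:
  assumes "\<And>t. \<gamma> t \<in> Kgrp" "\<gamma> 0 = mat 1" "(\<gamma> has_vector_derivative X) (at 0)"
    and "((\<lambda>t. kact (\<gamma> t) v) has_vector_derivative y) (at 0)"
  shows "gact X v = y"
proof -
  have "((\<lambda>t. kact (\<gamma> t) v) has_vector_derivative gact X v) (at 0)"
    using gK_module assms(1-3) unfolding gK_module_def by blast
  then show ?thesis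
    using assms(4) by (rule vector_derivative_unique_at)
qed

lemmas gact_linear = gact_clin[THEN clin_add] gact_clin[THEN clin_diff] gact_clin[THEN clin_minus]
  gact_clin[THEN clin_zero] gact_clin[THEN clin_scaleR] gact_clin[THEN clin_cscale]

lemmas kact_linear = kact_clin[THEN clin_add] kact_clin[THEN clin_diff] kact_clin[THEN clin_minus]
  kact_clin[THEN clin_zero] kact_clin[THEN clin_cscale]

lemma gact_msc: "X \<in> sl3 \<Longrightarrow> gact (c *m X) v = cscale J c (gact X v)"
  using gact_lincomb[of X X c 0 v] by simp

lemma gact_minus_mat: "X \<in> sl3 \<Longrightarrow> gact (- X) v = - gact X v"
  using gact_msc[of X "-1" v] by (simp add: msc_minus_one cscale_minus_left)

lemma gact_add_mat: "X \<in> sl3 \<Longrightarrow> Y \<in> sl3 \<Longrightarrow> gact (X + Y) v = gact X v + gact Y v"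
  using gact_lincomb[of X Y 1 1 v] by simp

lemma gact_zero_mat: "gact 0 v = 0"
  using gact_msc[of "Emat 1 2" 0 v] by simp

lemma kact_kmat_gact:
  assumes "cmod \<eta> = 1" "(cmod \<alpha>)\<^sup>2 + (cmod \<beta>)\<^sup>2 = 1" "X \<in> sl3"
  shows "kact (kmat \<eta> \<alpha> \<beta>) (gact X v)
    = gact (kmat \<eta> \<alpha> \<beta> ** X ** kmat (cnj \<eta>) (cnj \<alpha>) (- \<beta>)) (kact (kmat \<eta> \<alpha> \<beta>) v)"
  using kact_gact[OF Kgrp_kmat[OF assms(1,2)] assms(3)] by (simp add: matrix_inv_kmat[OF assms(1,2)])

lemma E_bracket:
  "i \<noteq> j \<Longrightarrow> k \<noteq> l \<Longrightarrow> E i j (E k l w) = E k l (E i j w) + gact (Emat i j ** Emat k l - Emat k l ** Emat i j) w"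
  using gact_bracket[of "Emat i j" "Emat k l" w] by simp

lemma E12_E31: "E 1 2 (E 3 1 w) = E 3 1 (E 1 2 w) - E 3 2 w"
  using E_bracket[of 1 2 3 1 w] by (simp add: Emat_mult gact_minus_mat)

lemma E12_E23: "E 1 2 (E 2 3 w) = E 2 3 (E 1 2 w) + E 1 3 w"
  using E_bracket[of 1 2 2 3 w] by (simp add: Emat_mult)

lemma E31_E23: "E 3 1 (E 2 3 w) = E 2 3 (E 3 1 w) - E 2 1 w"
  using E_bracket[of 3 1 2 3 w] by (simp add: Emat_mult gact_minus_mat)

lemma E32_E13: "E 3 2 (E 1 3 w) = E 1 3 (E 3 2 w) - E 1 2 w"
  using E_bracket[of 3 2 1 3 w] by (simp add: Emat_mult gact_minus_mat)

lemma E32_E12: "E 3 2 (E 1 2 w) = E 1 2 (E 3 2 w)"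
  using E_bracket[of 3 2 1 2 w] by (simp add: Emat_mult gact_zero_mat)

lemma E13_E12: "E 1 3 (E 1 2 w) = E 1 2 (E 1 3 w)"
  using E_bracket[of 1 3 1 2 w] by (simp add: Emat_mult gact_zero_mat)

lemma E13_E31: "E 1 3 (E 3 1 w) = E 3 1 (E 1 3 w) + gact (Emat 1 1 - Emat 3 3) w"
  using E_bracket[of 1 3 3 1 w] by (simp add: Emat_mult)

lemma E32_E23: "E 3 2 (E 2 3 w) = E 2 3 (E 3 2 w) + gact (Emat 3 3 - Emat 2 2) w"
  using E_bracket[of 3 2 2 3 w] by (simp add: Emat_mult)

lemma E21_E12: "E 2 1 (E 1 2 w) = E 1 2 (E 2 1 w) + gact (Emat 2 2 - Emat 1 1) w"
  using E_bracket[of 2 1 1 2 w] by (simp add: Emat_mult)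

section \<open>K-equivariant maps from \<open>\<tau>\<^sup>h\<^sub>p\<close>\<close>

lemma Khom_lincomb:
  "\<psi> \<in> Khom J kact h n \<Longrightarrow> f \<in> Ppoly n \<Longrightarrow> g \<in> Ppoly n \<Longrightarrow>
    \<psi> (\<lambda>z. a * f z + b * g z) = cscale J a (\<psi> f) + cscale J b (\<psi> g)"
  by (simp add: Khom_def)

lemma Khom_scale: "\<psi> \<in> Khom J kact h n \<Longrightarrow> f \<in> Ppoly n \<Longrightarrow> \<psi> (\<lambda>z. a * f z) = cscale J a (\<psi> f)"
  using Khom_lincomb[of \<psi> h n f f a 0] by simp

lemma Khom_zero_poly: "\<psi> \<in> Khom J kact h n \<Longrightarrow> \<psi> (\<lambda>z. 0) = 0"
  using Khom_scale[of \<psi> h n "\<lambda>z. 0" 0] Ppoly_zero by simp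

lemma Khom_equivariant:
  "\<psi> \<in> Khom J kact h n \<Longrightarrow> cmod \<eta> = 1 \<Longrightarrow> (cmod \<alpha>)\<^sup>2 + (cmod \<beta>)\<^sup>2 = 1 \<Longrightarrow> f \<in> Ppoly n \<Longrightarrow>
    \<psi> (\<lambda>z. \<eta> powi (- h) * tau \<alpha> \<beta> f z) = kact (kmat \<eta> \<alpha> \<beta>) (\<psi> f)"
  by (simp add: Khom_def)

lemma Khom_hpoly:
  assumes \<psi>: "\<psi> \<in> Khom J kact h n"
  shows "\<psi> (hpoly n c) = (\<Sum>j\<le>n. cscale J (c j) (\<psi> (zmonom n j)))"
proof -
  have restricted: "\<psi> (hpoly n (\<lambda>j. if j \<in> S then c j else 0)) = (\<Sum>j\<in>S. cscale J (c j) (\<psi> (zmonom n j)))"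
    if "finite S" "S \<subseteq> {..n}" for S
    using that
  proof (induction S rule: finite_induct)
    case empty
    then show ?case using Khom_zero_poly[OF \<psi>] by (simp add: hpoly_zero)
  next
    case (insert x S)
    let ?F = "hpoly n (\<lambda>j. if j \<in> S then c j else 0)"
    have "hpoly n (\<lambda>j. if j \<in> insert x S then c j else 0)
        = hpoly n (\<lambda>j. c x * (if j = x then 1 else 0) + 1 * (if j \<in> S then c j else 0))"
      using insert.hyps by (intro arg_cong[where f="hpoly n"]) auto
    also have "\<dots> = (\<lambda>z. c x * zmonom n x z + 1 * ?F z)"
      using insert.prems by (simp only: hpoly_lincomb[symmetric]) (simp add: zmonom_eq_hpoly)
    finally have "\<psi> (hpoly n (\<lambda>j. if j \<in> insert x S then c j else 0))
        = cscale J (c x) (\<psi> (zmonom n x)) + cscale J 1 (\<psi> ?F)"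
      using insert.prems by (simp only:) (intro Khom_lincomb[OF \<psi> zmonom_in_Ppoly hpoly_in_Ppoly], simp)
    then show ?case
      using insert by simp
  qed
  have "hpoly n (\<lambda>j. if j \<in> {..n} then c j else 0) = hpoly n c"
    unfolding hpoly_def by (intro ext sum.cong) auto
  then show ?thesis
    using restricted[of "{..n}"] by simp
qed

lemma zero_in_Khom: "(\<lambda>f. 0) \<in> Khom J kact h n"
  by (simp add: Khom_def kact_linear Kgrp_kmat)

lemma Khom_add: "\<psi> \<in> Khom J kact h n \<Longrightarrow> \<phi> \<in> Khom J kact h n \<Longrightarrow> (\<lambda>f. \<psi> f + \<phi> f) \<in> Khom J kact h n"
  by (simp add: Khom_def kact_linear Kgrp_kmat cscale_add_right)

lemma Khom_cscale: "\<psi> \<in> Khom J kact h n \<Longrightarrow> (\<lambda>f. cscale J a (\<psi> f)) \<in> Khom J kact h n"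
  by (simp add: Khom_def kact_linear Kgrp_kmat cscale_add_right mult.commute)

lemma Viso_decomposition:
  assumes "v \<in> Viso J kact h n"
  shows "\<exists>\<psi>s. (\<forall>j\<le>n. \<psi>s j \<in> Khom J kact h n) \<and> v = (\<Sum>j\<le>n. \<psi>s j (zmonom n j))"
  using assms unfolding Viso_def
proof (induction rule: real_vector.span_induct_alt)
  case base
  show ?case
    by (rule exI[of _ "\<lambda>j f. 0"]) (simp add: zero_in_Khom)
next
  case (step r x y)
  obtain \<phi> F where \<phi>: "\<phi> \<in> Khom J kact h n" and "F \<in> Ppoly n" and x: "x = \<phi> F"
    using step.hyps by blast
  then obtain c where F: "F = hpoly n c" by (auto simp: Ppoly_iff)
  obtain \<psi>s where \<psi>s: "\<forall>j\<le>n. \<psi>s j \<in> Khom J kact h n" and y: "y = (\<Sum>j\<le>n. \<psi>s j (zmonom n j))"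
    using step.IH by blast
  let ?\<psi>s = "\<lambda>j f. cscale J (of_real r * c j) (\<phi> f) + \<psi>s j f"
  have "\<forall>j\<le>n. ?\<psi>s j \<in> Khom J kact h n"
    using \<psi>s by (simp add: Khom_add Khom_cscale[OF \<phi>])
  moreover have "r *\<^sub>R x + y = (\<Sum>j\<le>n. ?\<psi>s j (zmonom n j))"
  proof -
    have "r *\<^sub>R x + y
        = (\<Sum>j\<le>n. r *\<^sub>R cscale J (c j) (\<phi> (zmonom n j))) + (\<Sum>j\<le>n. \<psi>s j (zmonom n j))"
      by (simp only: x F Khom_hpoly[OF \<phi>] y scaleR_sum_right)
    then show ?thesis
      by (simp only: sum.distrib[symmetric] cscale_of_real_mult)
  qed
  ultimately show ?case
    by (intro exI[where x = "?\<psi>s"] conjI)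
qed

lemma gact_W0_Khom:
  assumes \<psi>: "\<psi> \<in> Khom J kact h n" and "j \<le> n"
  shows "gact W0 (\<psi> (zmonom n j)) = cscale J (\<i> * (of_nat j - of_nat (n - j))) (\<psi> (zmonom n j))"
proof -
  let ?w = "\<psi> (zmonom n j)"
  define r where "r = real j - real (n - j)"
  have "((\<lambda>t. kmat 1 (cis t) 0) has_vector_derivative
      (\<i> *m Emat 1 1 + 0 *m Emat 1 2 + (- cnj 0) *m Emat 2 1 + cnj \<i> *m Emat 2 2)) (at 0)"
  proof (rule kmat_1_has_vector_derivative[OF _ has_vector_derivative_const])
    have "((\<lambda>t. of_real (cos t) + \<i> * of_real (sin t)) has_vector_derivative
        of_real (- sin 0) + \<i> * of_real (cos 0)) (at 0)"
      by (intro has_vector_derivative_add has_vector_derivative_mult_right has_vector_derivative_of_real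
          DERIV_cos DERIV_sin)
    moreover have "(\<lambda>t. of_real (cos t) + \<i> * of_real (sin t)) = cis"
      by (simp add: fun_eq_iff complex_eq_iff)
    ultimately show "(cis has_vector_derivative \<i>) (at 0)"
      by simp
  qed
  moreover have "\<i> *m Emat 1 1 + 0 *m Emat 1 2 + (- cnj 0) *m Emat 2 1 + cnj \<i> *m Emat 2 2 = W0"
    by (auto simp: W0_def mat_simps)
  ultimately have curve: "((\<lambda>t. kmat 1 (cis t) 0) has_vector_derivative W0) (at 0)"
    by simp
  have orbit: "kact (kmat 1 (cis t) 0) ?w = cos (r * t) *\<^sub>R ?w + sin (r * t) *\<^sub>R J ?w" for t
  proof -
    have "cis t ^ j * cnj (cis t) ^ (n - j) = cis (r * t)"
      by (simp only: cis_cnj Complex.DeMoivre cis_mult r_def) (rule arg_cong[where f=cis], simp add: algebra_simps)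
    then have "(\<lambda>z. 1 powi (- h) * tau (cis t) 0 (zmonom n j) z) = (\<lambda>z. cis (r * t) * zmonom n j z)"
      by (auto simp: tau_def zmonom_def fun_eq_iff power_mult_distrib mult_ac)
    then have "kact (kmat 1 (cis t) 0) ?w = \<psi> (\<lambda>z. cis (r * t) * zmonom n j z)"
      using Khom_equivariant[OF \<psi>, of 1 "cis t" 0 "zmonom n j"] zmonom_in_Ppoly[OF \<open>j \<le> n\<close>] by simp
    also have "\<dots> = cos (r * t) *\<^sub>R ?w + sin (r * t) *\<^sub>R J ?w"
      using Khom_scale[OF \<psi> zmonom_in_Ppoly[OF \<open>j \<le> n\<close>]] by (simp add: cscale_def)
    finally show ?thesis .
  qed
  have cos': "((\<lambda>t. cos (r * t)) has_real_derivative 0) (at 0)"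
    and sin': "((\<lambda>t. sin (r * t)) has_real_derivative r) (at 0)"
    by (auto intro!: derivative_eq_intros)
  have "((\<lambda>t. cos (r * t) *\<^sub>R ?w + sin (r * t) *\<^sub>R J ?w) has_vector_derivative r *\<^sub>R J ?w) (at 0)"
    using has_vector_derivative_add[OF has_vector_derivative_scaleR[OF cos' has_vector_derivative_const]
        has_vector_derivative_scaleR[OF sin' has_vector_derivative_const]]
    by simp
  then have "((\<lambda>t. kact (kmat 1 (cis t) 0) ?w) has_vector_derivative r *\<^sub>R J ?w) (at 0)"
    unfolding orbit .
  moreover have "kmat 1 (cis t) 0 \<in> Kgrp" for t
    by (simp add: Kgrp_kmat)
  ultimately have "gact W0 ?w = r *\<^sub>R J ?w"
    using gact_eq_derivative[OF _ _ curve] kmat_1_1_0 by simp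
  then show ?thesis
    by (simp add: cscale_def r_def)
qed

lemma gact_rotation_Khom:
  assumes \<psi>: "\<psi> \<in> Khom J kact h n" and \<zeta>: "cmod \<zeta> = 1"
  shows "gact (\<zeta> *m Emat 1 2 + (- cnj \<zeta>) *m Emat 2 1) (\<psi> (zmonom n 0))
    = real n *\<^sub>R cscale J \<zeta> (\<psi> (zmonom n 1))"
proof -
  let ?\<gamma> = "\<lambda>t. kmat 1 (of_real (cos t)) (\<zeta> * of_real (sin t))"
  let ?r = "\<lambda>k t. real (n choose k) * sin t ^ k * cos t ^ (n - k)"
  have K: "?\<gamma> t \<in> Kgrp" for t
    using \<zeta> by (intro Kgrp_kmat) (simp_all add: norm_mult)
  have "(?\<gamma> has_vector_derivative (of_real (- sin 0) *m Emat 1 1 + (\<zeta> * of_real (cos 0)) *m Emat 1 2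
      + (- cnj (\<zeta> * of_real (cos 0))) *m Emat 2 1 + cnj (of_real (- sin 0)) *m Emat 2 2)) (at 0)"
    by (intro kmat_1_has_vector_derivative has_vector_derivative_of_real
        has_vector_derivative_mult_right DERIV_cos DERIV_sin)
  moreover have "of_real (- sin 0) *m Emat 1 1 + (\<zeta> * of_real (cos 0)) *m Emat 1 2
      + (- cnj (\<zeta> * of_real (cos 0))) *m Emat 2 1 + cnj (of_real (- sin 0)) *m Emat 2 2
      = \<zeta> *m Emat 1 2 + (- cnj \<zeta>) *m Emat 2 1"
    by (auto simp: mat_simps)
  ultimately have curve: "(?\<gamma> has_vector_derivative (\<zeta> *m Emat 1 2 + (- cnj \<zeta>) *m Emat 2 1)) (at 0)"
    by (simp only:)
  have orbit: "kact (?\<gamma> t) (\<psi> (zmonom n 0)) = (\<Sum>k\<le>n. ?r k t *\<^sub>R cscale J (\<zeta> ^ k) (\<psi> (zmonom n k)))" for t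
  proof -
    have "kact (?\<gamma> t) (\<psi> (zmonom n 0))
        = \<psi> (\<lambda>z. 1 powi (- h) * tau (of_real (cos t)) (\<zeta> * of_real (sin t)) (zmonom n 0) z)"
      using Khom_equivariant[OF \<psi>, of 1 "of_real (cos t)" "\<zeta> * of_real (sin t)"] zmonom_in_Ppoly[of 0 n] \<zeta>
      by (simp add: norm_mult)
    also have "(\<lambda>z. 1 powi (- h) * tau (of_real (cos t)) (\<zeta> * of_real (sin t)) (zmonom n 0) z)
        = hpoly n (\<lambda>k. of_real (?r k t) * \<zeta> ^ k)"
      by (simp add: tau_def zmonom_def hpoly_def fun_eq_iff binomial_ring power_mult_distrib mult_ac)
    finally show ?thesis
      by (simp only: Khom_hpoly[OF \<psi>] cscale_of_real_mult)
  qed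
  have "((\<lambda>t. kact (?\<gamma> t) (\<psi> (zmonom n 0))) has_vector_derivative
      real n *\<^sub>R cscale J \<zeta> (\<psi> (zmonom n 1))) (at 0)"
    unfolding orbit using binomial_trig_has_vector_derivative[of n "\<lambda>k. cscale J (\<zeta> ^ k) (\<psi> (zmonom n k))"]
    by simp
  then show ?thesis
    using gact_eq_derivative[OF K _ curve] kmat_1_1_0 by simp
qed

lemma E12_Khom:
  assumes \<psi>: "\<psi> \<in> Khom J kact h n"
  shows "E 1 2 (\<psi> (zmonom n 0)) = real n *\<^sub>R \<psi> (zmonom n 1)"
proof -
  let ?X = "\<lambda>\<zeta>. \<zeta> *m Emat 1 2 + (- cnj \<zeta>) *m Emat 2 1"
  have X: "?X \<zeta> \<in> sl3" for \<zeta>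
    by (simp add: sl3_lincomb)
  have "Emat 1 2 = (1/2) *m ?X 1 + (- \<i>/2) *m ?X \<i>"
    by (auto simp: mat_simps)
  then have "E 1 2 (\<psi> (zmonom n 0)) = gact ((1/2) *m ?X 1 + (- \<i>/2) *m ?X \<i>) (\<psi> (zmonom n 0))"
    by (rule arg_cong[where f="\<lambda>X. gact X (\<psi> (zmonom n 0))"])
  also have "\<dots> = cscale J (1/2) (gact (?X 1) (\<psi> (zmonom n 0))) + cscale J (- \<i>/2) (gact (?X \<i>) (\<psi> (zmonom n 0)))"
    by (rule gact_lincomb[OF X X])
  also have "\<dots> = real n *\<^sub>R \<psi> (zmonom n 1)"
    unfolding gact_rotation_Khom[OF \<psi> norm_one] gact_rotation_Khom[OF \<psi> norm_ii]
    by (simp add: cscale_scaleR flip: scaleR_add_right cscale_add_left)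
  finally show ?thesis .
qed

lemma E21_Khom:
  assumes \<psi>: "\<psi> \<in> Khom J kact h n"
  shows "E 2 1 (\<psi> (zmonom n 0)) = 0"
proof -
  let ?X = "\<lambda>\<zeta>. \<zeta> *m Emat 1 2 + (- cnj \<zeta>) *m Emat 2 1"
  have X: "?X \<zeta> \<in> sl3" for \<zeta>
    by (simp add: sl3_lincomb)
  have "Emat 2 1 = (- 1/2) *m ?X 1 + (- \<i>/2) *m ?X \<i>"
    by (auto simp: mat_simps)
  then have "E 2 1 (\<psi> (zmonom n 0)) = gact ((- 1/2) *m ?X 1 + (- \<i>/2) *m ?X \<i>) (\<psi> (zmonom n 0))"
    by (rule arg_cong[where f="\<lambda>X. gact X (\<psi> (zmonom n 0))"])
  also have "\<dots> = cscale J (- 1/2) (gact (?X 1) (\<psi> (zmonom n 0))) + cscale J (- \<i>/2) (gact (?X \<i>) (\<psi> (zmonom n 0)))"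
    by (rule gact_lincomb[OF X X])
  also have "\<dots> = 0"
    unfolding gact_rotation_Khom[OF \<psi> norm_one] gact_rotation_Khom[OF \<psi> norm_ii]
    by (simp add: cscale_scaleR flip: scaleR_add_right cscale_add_left)
  finally show ?thesis
    by simp
qed
lemma Vhpp_int_eq: "Vhpp J gact kact h (int n) = (\<lambda>\<psi>. \<psi> (zmonom n 0)) ` Khom J kact h n"
proof (intro equalityI subsetI)
  fix v assume "v \<in> Vhpp J gact kact h (int n)"
  then have v: "v \<in> Viso J kact h n" "gact W0 v = cscale J (- \<i> * of_nat n) v"
    by (simp_all add: Vhpp_def)
  obtain \<psi>s where \<psi>s: "\<forall>j\<le>n. \<psi>s j \<in> Khom J kact h n" and vs: "v = (\<Sum>j\<le>n. \<psi>s j (zmonom n j))"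
    using Viso_decomposition[OF v(1)] by blast
  define lam where "lam j = \<i> * (of_nat j - of_nat (n - j))" for j
  have v0: "v = \<psi>s 0 (zmonom n 0) + (\<Sum>j\<in>{..n} - {0}. \<psi>s j (zmonom n j))"
    unfolding vs by (rule sum.remove) auto
  have "(\<Sum>j\<in>{..n} - {0}. \<psi>s j (zmonom n j)) = 0"
  proof (rule eigenvector_sum_eq_zero[OF gact_clin[OF sl3_W0], where i = 0 and lam = lam])
    show "inj_on lam (insert 0 ({..n} - {0}))"
      using inj_on_zmonom_weights[of n] by (simp add: lam_def[abs_def] insert_absorb)
    show "gact W0 (\<psi>s j (zmonom n j)) = cscale J (lam j) (\<psi>s j (zmonom n j))"
      if "j \<in> insert 0 ({..n} - {0})" for j
      unfolding lam_def using that \<psi>s by (intro gact_W0_Khom[of "\<psi>s j" h n j]) auto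
    show "gact W0 (\<psi>s 0 (zmonom n 0) + (\<Sum>j\<in>{..n} - {0}. \<psi>s j (zmonom n j)))
        = cscale J (lam 0) (\<psi>s 0 (zmonom n 0) + (\<Sum>j\<in>{..n} - {0}. \<psi>s j (zmonom n j)))"
      using v(2) v0 by (simp add: lam_def)
  qed auto
  then show "v \<in> (\<lambda>\<psi>. \<psi> (zmonom n 0)) ` Khom J kact h n"
    using v0 \<psi>s by auto
next
  fix v assume "v \<in> (\<lambda>\<psi>. \<psi> (zmonom n 0)) ` Khom J kact h n"
  then obtain \<psi> where \<psi>: "\<psi> \<in> Khom J kact h n" and v: "v = \<psi> (zmonom n 0)"
    by blast
  have "v \<in> Viso J kact h n"
    unfolding Viso_def v using \<psi> zmonom_in_Ppoly[of 0 n] by (intro span_base) blast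
  moreover have "gact W0 v = cscale J (- \<i> * of_nat n) v"
    using gact_W0_Khom[OF \<psi>, of 0] by (simp add: v)
  ultimately show "v \<in> Vhpp J gact kact h (int n)"
    by (simp add: Vhpp_def)
qed

lemma Vhpp_scaleR:
  assumes "v \<in> Vhpp J gact kact h p"
  shows "r *\<^sub>R v \<in> Vhpp J gact kact h p"
proof (cases "p < 0")
  case True
  then show ?thesis
    using assms by (simp add: Vhpp_def)
next
  case False
  then obtain n where p: "p = int n"
    by (metis nonneg_int_cases not_less)
  obtain \<psi> where \<psi>: "\<psi> \<in> Khom J kact h n" and v: "v = \<psi> (zmonom n 0)"
    using assms unfolding p Vhpp_int_eq by blast
  show ?thesis
    unfolding p Vhpp_int_eq
    by (rule image_eqI[where x="\<lambda>f. r *\<^sub>R \<psi> f"])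
      (use Khom_cscale[OF \<psi>, of "of_real r"] in \<open>simp_all add: v\<close>)
qed

lemma E21_Vhpp: "v \<in> Vhpp J gact kact h (int n) \<Longrightarrow> E 2 1 v = 0"
  by (auto simp: Vhpp_int_eq E21_Khom)

lemma H_Vhpp:
  assumes "v \<in> Vhpp J gact kact h (int n)"
  shows "gact (Emat 2 2 - Emat 1 1) v = real n *\<^sub>R v"
proof -
  have "Emat 2 2 - Emat 1 1 = \<i> *m W0"
    by (auto simp: W0_def mat_simps)
  then show ?thesis
    using assms by (simp add: Vhpp_def gact_msc sl3_W0)
qed

section \<open>Shift operators\<close>

text \<open>\<open>(P, Q)\<close> transforms under \<open>K\<close> like the coordinates \<open>(z\<^sub>1, z\<^sub>2)\<close> of \<open>\<tau>\<^sup>d\<^sub>1\<close>.\<close>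

definition K_doublet :: "int \<Rightarrow> ('v \<Rightarrow> 'v) \<Rightarrow> ('v \<Rightarrow> 'v) \<Rightarrow> bool" where
  "K_doublet d P Q \<longleftrightarrow> clin J P \<and> clin J Q \<and>
    (\<forall>\<eta> \<alpha> \<beta> w. cmod \<eta> = 1 \<longrightarrow> (cmod \<alpha>)\<^sup>2 + (cmod \<beta>)\<^sup>2 = 1 \<longrightarrow>
      kact (kmat \<eta> \<alpha> \<beta>) (P w) = cscale J (\<eta> powi (- d) * \<alpha>) (P (kact (kmat \<eta> \<alpha> \<beta>) w))
        - cscale J (\<eta> powi (- d) * cnj \<beta>) (Q (kact (kmat \<eta> \<alpha> \<beta>) w)) \<and>
      kact (kmat \<eta> \<alpha> \<beta>) (Q w) = cscale J (\<eta> powi (- d) * \<beta>) (P (kact (kmat \<eta> \<alpha> \<beta>) w))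
        + cscale J (\<eta> powi (- d) * cnj \<alpha>) (Q (kact (kmat \<eta> \<alpha> \<beta>) w)))"

lemma K_doublet_E32_E31: "K_doublet 3 (gact (- Emat 3 2)) (E 3 1)"
  unfolding K_doublet_def
proof (intro conjI allI impI)
  show "clin J (gact (- Emat 3 2))" "clin J (E 3 1)"
    by (simp_all add: gact_clin sl3_uminus)
  fix \<eta> \<alpha> \<beta> w assume \<eta>: "cmod \<eta> = 1" and \<alpha>\<beta>: "(cmod \<alpha>)\<^sup>2 + (cmod \<beta>)\<^sup>2 = 1"
  have c: "\<eta> powi (- 3) = cnj \<eta> ^ 3"
    using unit_powi_minus[OF \<eta>, of 3] by simp
  show "kact (kmat \<eta> \<alpha> \<beta>) (gact (- Emat 3 2) w)
      = cscale J (\<eta> powi (- 3) * \<alpha>) (gact (- Emat 3 2) (kact (kmat \<eta> \<alpha> \<beta>) w))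
        - cscale J (\<eta> powi (- 3) * cnj \<beta>) (E 3 1 (kact (kmat \<eta> \<alpha> \<beta>) w))"
    and "kact (kmat \<eta> \<alpha> \<beta>) (E 3 1 w)
      = cscale J (\<eta> powi (- 3) * \<beta>) (gact (- Emat 3 2) (kact (kmat \<eta> \<alpha> \<beta>) w))
        + cscale J (\<eta> powi (- 3) * cnj \<alpha>) (E 3 1 (kact (kmat \<eta> \<alpha> \<beta>) w))"
    by (simp_all add: c gact_minus_mat kact_linear Kgrp_kmat[OF \<eta> \<alpha>\<beta>] kact_kmat_gact[OF \<eta> \<alpha>\<beta>]
        kmat_conj_Emat[OF \<eta>] gact_lincomb cscale_minus_left cscale_minus_right algebra_simps)
qed

lemma K_doublet_E13_E23: "K_doublet (- 3) (E 1 3) (E 2 3)"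
  unfolding K_doublet_def
proof (intro conjI allI impI)
  show "clin J (E 1 3)" "clin J (E 2 3)"
    by (simp_all add: gact_clin)
  fix \<eta> \<alpha> \<beta> w assume \<eta>: "cmod \<eta> = 1" and \<alpha>\<beta>: "(cmod \<alpha>)\<^sup>2 + (cmod \<beta>)\<^sup>2 = 1"
  show "kact (kmat \<eta> \<alpha> \<beta>) (E 1 3 w)
      = cscale J (\<eta> powi (- (- 3)) * \<alpha>) (E 1 3 (kact (kmat \<eta> \<alpha> \<beta>) w))
        - cscale J (\<eta> powi (- (- 3)) * cnj \<beta>) (E 2 3 (kact (kmat \<eta> \<alpha> \<beta>) w))"
    and "kact (kmat \<eta> \<alpha> \<beta>) (E 2 3 w)
      = cscale J (\<eta> powi (- (- 3)) * \<beta>) (E 1 3 (kact (kmat \<eta> \<alpha> \<beta>) w))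
        + cscale J (\<eta> powi (- (- 3)) * cnj \<alpha>) (E 2 3 (kact (kmat \<eta> \<alpha> \<beta>) w))"
    by (simp_all add: kact_kmat_gact[OF \<eta> \<alpha>\<beta>] kmat_conj_Emat[OF \<eta>] gact_lincomb
        cscale_minus_left algebra_simps)
qed

end

text \<open>For a \<open>K\<close>-doublet \<open>(P, Q)\<close>, these compose \<open>\<psi>\<close> with the
  \<open>K\<close>-equivariant embeddings \<open>\<tau>\<^sub>p\<^sub>+\<^sub>1 \<rightarrow> \<tau>\<^sub>p \<otimes> \<tau>\<^sub>1\<close>, \<open>F \<mapsto> \<partial>\<^sub>1F \<otimes> z\<^sub>1 + \<partial>\<^sub>2F \<otimes> z\<^sub>2\<close>,
  and \<open>\<tau>\<^sub>m \<rightarrow> \<tau>\<^sub>m\<^sub>+\<^sub>1 \<otimes> \<tau>\<^sub>1\<close>, \<open>G \<mapsto> z\<^sub>2G \<otimes> z\<^sub>1 - z\<^sub>1G \<otimes> z\<^sub>2\<close>.\<close>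

definition raise_hom :: "('v::real_vector \<Rightarrow> 'v) \<Rightarrow> ('v \<Rightarrow> 'v) \<Rightarrow> ((complex \<times> complex \<Rightarrow> complex) \<Rightarrow> 'v)
    \<Rightarrow> (complex \<times> complex \<Rightarrow> complex) \<Rightarrow> 'v" where
  "raise_hom P Q \<psi> F = P (\<psi> (partial1 F)) + Q (\<psi> (partial2 F))"

definition lower_hom :: "('v::real_vector \<Rightarrow> 'v) \<Rightarrow> ('v \<Rightarrow> 'v) \<Rightarrow> ((complex \<times> complex \<Rightarrow> complex) \<Rightarrow> 'v)
    \<Rightarrow> (complex \<times> complex \<Rightarrow> complex) \<Rightarrow> 'v" where
  "lower_hom P Q \<psi> G = P (\<psi> (\<lambda>z. snd z * G z)) - Q (\<psi> (\<lambda>z. fst z * G z))"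

context gK_mod
begin

lemma raise_hom_lincomb:
  assumes P: "clin J P" and Q: "clin J Q" and \<psi>: "\<psi> \<in> Khom J kact h p"
    and f: "f \<in> Ppoly (Suc p)" and g: "g \<in> Ppoly (Suc p)"
  shows "raise_hom P Q \<psi> (\<lambda>z. a * f z + b * g z)
    = cscale J a (raise_hom P Q \<psi> f) + cscale J b (raise_hom P Q \<psi> g)"
  using Khom_lincomb[OF \<psi> partial1_Ppoly[OF f] partial1_Ppoly[OF g]]
    Khom_lincomb[OF \<psi> partial2_Ppoly[OF f] partial2_Ppoly[OF g]]
  by (simp add: raise_hom_def partial1_lincomb[OF f g] partial2_lincomb[OF f g]
      clin_simps[OF P] clin_simps[OF Q] cscale_add_right algebra_simps)

lemma raise_hom_equivariant:
  assumes PQ: "K_doublet d P Q" and \<psi>: "\<psi> \<in> Khom J kact h p" and f: "f \<in> Ppoly (Suc p)"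
    and \<eta>: "cmod \<eta> = 1" and \<alpha>\<beta>: "(cmod \<alpha>)\<^sup>2 + (cmod \<beta>)\<^sup>2 = 1"
  shows "raise_hom P Q \<psi> (\<lambda>z. \<eta> powi (- (h + d)) * tau \<alpha> \<beta> f z) = kact (kmat \<eta> \<alpha> \<beta>) (raise_hom P Q \<psi> f)"
proof -
  have P: "clin J P" and Q: "clin J Q"
    using PQ by (simp_all add: K_doublet_def)
  have f1: "partial1 f \<in> Ppoly p" and f2: "partial2 f \<in> Ppoly p"
    using partial1_Ppoly[OF f] partial2_Ppoly[OF f] .
  let ?k = "kmat \<eta> \<alpha> \<beta>" and ?c = "\<eta> powi (- d)"
  have powi: "\<eta> powi (- (h + d)) = \<eta> powi (- h) * ?c"
    using \<eta> by (intro power_int_minus_add) auto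
  have "raise_hom P Q \<psi> (\<lambda>z. \<eta> powi (- (h + d)) * tau \<alpha> \<beta> f z)
      = P (\<psi> (\<lambda>z. \<eta> powi (- h) * tau \<alpha> \<beta> (\<lambda>z. (?c * \<alpha>) * partial1 f z + (?c * \<beta>) * partial2 f z) z))
      + Q (\<psi> (\<lambda>z. \<eta> powi (- h) * tau \<alpha> \<beta> (\<lambda>z. (- (?c * cnj \<beta>)) * partial1 f z + (?c * cnj \<alpha>) * partial2 f z) z))"
    unfolding raise_hom_def partial1_tau[OF f] partial2_tau[OF f] powi
    by (simp add: tau_def algebra_simps)
  also have "\<dots> = P (kact ?k (cscale J (?c * \<alpha>) (\<psi> (partial1 f)) + cscale J (?c * \<beta>) (\<psi> (partial2 f))))
      + Q (kact ?k (cscale J (- (?c * cnj \<beta>)) (\<psi> (partial1 f)) + cscale J (?c * cnj \<alpha>) (\<psi> (partial2 f))))"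
    by (simp only: Khom_equivariant[OF \<psi> \<eta> \<alpha>\<beta> Ppoly_lincomb[OF f1 f2]] Khom_lincomb[OF \<psi> f1 f2])
  also have "\<dots> = kact ?k (raise_hom P Q \<psi> f)"
    using PQ \<eta> \<alpha>\<beta> unfolding K_doublet_def raise_hom_def
    by (simp add: kact_linear Kgrp_kmat clin_simps[OF P] clin_simps[OF Q] cscale_minus_left algebra_simps)
  finally show ?thesis .
qed

lemma raise_hom_Khom:
  assumes PQ: "K_doublet d P Q" and \<psi>: "\<psi> \<in> Khom J kact h p"
  shows "raise_hom P Q \<psi> \<in> Khom J kact (h + d) (Suc p)"
proof -
  have P: "clin J P" and Q: "clin J Q"
    using PQ by (simp_all add: K_doublet_def)
  show ?thesis
    unfolding Khom_def mem_Collect_eq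
    using raise_hom_lincomb[OF P Q \<psi>] raise_hom_equivariant[OF PQ \<psi>] by blast
qed

lemma lower_hom_lincomb:
  assumes P: "clin J P" and Q: "clin J Q" and \<psi>: "\<psi> \<in> Khom J kact h (Suc m)"
    and f: "f \<in> Ppoly m" and g: "g \<in> Ppoly m"
  shows "lower_hom P Q \<psi> (\<lambda>z. a * f z + b * g z)
    = cscale J a (lower_hom P Q \<psi> f) + cscale J b (lower_hom P Q \<psi> g)"
proof -
  have "(\<lambda>z. snd z * (a * f z + b * g z)) = (\<lambda>z. a * (snd z * f z) + b * (snd z * g z))"
    and "(\<lambda>z. fst z * (a * f z + b * g z)) = (\<lambda>z. a * (fst z * f z) + b * (fst z * g z))"
    by (simp_all add: fun_eq_iff algebra_simps)
  then show ?thesis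
    using Khom_lincomb[OF \<psi> Ppoly_mult_snd[OF f] Ppoly_mult_snd[OF g]]
      Khom_lincomb[OF \<psi> Ppoly_mult_fst[OF f] Ppoly_mult_fst[OF g]]
    by (simp add: lower_hom_def clin_simps[OF P] clin_simps[OF Q] cscale_add_right cscale_diff_right
        algebra_simps)
qed

lemma lower_hom_equivariant:
  assumes PQ: "K_doublet d P Q" and \<psi>: "\<psi> \<in> Khom J kact h (Suc m)" and f: "f \<in> Ppoly m"
    and \<eta>: "cmod \<eta> = 1" and \<alpha>\<beta>: "(cmod \<alpha>)\<^sup>2 + (cmod \<beta>)\<^sup>2 = 1"
  shows "lower_hom P Q \<psi> (\<lambda>z. \<eta> powi (- (h + d)) * tau \<alpha> \<beta> f z) = kact (kmat \<eta> \<alpha> \<beta>) (lower_hom P Q \<psi> f)"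
proof -
  have P: "clin J P" and Q: "clin J Q"
    using PQ by (simp_all add: K_doublet_def)
  let ?k = "kmat \<eta> \<alpha> \<beta>" and ?c = "\<eta> powi (- d)"
  let ?Y = "\<lambda>z. snd z * f z" and ?X = "\<lambda>z. fst z * f z"
  have Y: "?Y \<in> Ppoly (Suc m)" and X: "?X \<in> Ppoly (Suc m)"
    using Ppoly_mult_snd[OF f] Ppoly_mult_fst[OF f] .
  have powi: "\<eta> powi (- (h + d)) = \<eta> powi (- h) * ?c"
    using \<eta> by (intro power_int_minus_add) auto
  have N: "\<alpha> * cnj \<alpha> + \<beta> * cnj \<beta> = 1"
    by (rule unit_pair_mult_cnj[OF \<alpha>\<beta>])
  have "lower_hom P Q \<psi> (\<lambda>z. \<eta> powi (- (h + d)) * tau \<alpha> \<beta> f z)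
      = P (\<psi> (\<lambda>z. \<eta> powi (- h) * tau \<alpha> \<beta> (\<lambda>z. (?c * \<alpha>) * ?Y z + (- (?c * \<beta>)) * ?X z) z))
      - Q (\<psi> (\<lambda>z. \<eta> powi (- h) * tau \<alpha> \<beta> (\<lambda>z. (?c * cnj \<alpha>) * ?X z + (?c * cnj \<beta>) * ?Y z) z))"
    unfolding lower_hom_def powi snd_mult_tau[OF N] fst_mult_tau[OF N] by (rule refl)
  also have "\<dots> = P (kact ?k (cscale J (?c * \<alpha>) (\<psi> ?Y) + cscale J (- (?c * \<beta>)) (\<psi> ?X)))
      - Q (kact ?k (cscale J (?c * cnj \<alpha>) (\<psi> ?X) + cscale J (?c * cnj \<beta>) (\<psi> ?Y)))"
    by (simp only: Khom_equivariant[OF \<psi> \<eta> \<alpha>\<beta> Ppoly_lincomb[OF Y X]]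
        Khom_equivariant[OF \<psi> \<eta> \<alpha>\<beta> Ppoly_lincomb[OF X Y]] Khom_lincomb[OF \<psi> Y X] Khom_lincomb[OF \<psi> X Y])
  also have "\<dots> = kact ?k (lower_hom P Q \<psi> f)"
    using PQ \<eta> \<alpha>\<beta> unfolding K_doublet_def lower_hom_def
    by (simp add: kact_linear Kgrp_kmat clin_simps[OF P] clin_simps[OF Q] cscale_minus_left algebra_simps)
  finally show ?thesis .
qed

lemma lower_hom_Khom:
  assumes PQ: "K_doublet d P Q" and \<psi>: "\<psi> \<in> Khom J kact h (Suc m)"
  shows "lower_hom P Q \<psi> \<in> Khom J kact (h + d) m"
proof -
  have P: "clin J P" and Q: "clin J Q"
    using PQ by (simp_all add: K_doublet_def)
  show ?thesis
    unfolding Khom_def mem_Collect_eq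
    using lower_hom_lincomb[OF P Q \<psi>] lower_hom_equivariant[OF PQ \<psi>] by blast
qed

lemma Vhpp_raise:
  assumes PQ: "K_doublet d P Q" and "v \<in> Vhpp J gact kact h (int n)"
  shows "Q v \<in> Vhpp J gact kact (h + d) (int n + 1)"
proof -
  obtain \<psi> where \<psi>: "\<psi> \<in> Khom J kact h n" and v: "v = \<psi> (zmonom n 0)"
    using assms(2) by (auto simp: Vhpp_int_eq)
  have P: "clin J P" and Q: "clin J Q"
    using PQ by (simp_all add: K_doublet_def)
  have "\<psi> (partial2 (zmonom (Suc n) 0)) = cscale J (of_nat (Suc n)) v"
    unfolding partial2_zmonom v by (rule Khom_scale[OF \<psi> zmonom_in_Ppoly]) simp
  then have "raise_hom P Q \<psi> (zmonom (Suc n) 0) = real (Suc n) *\<^sub>R Q v"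
    by (simp add: raise_hom_def partial1_zmonom Khom_zero_poly[OF \<psi>] clin_simps[OF P] clin_simps[OF Q]
        del: of_nat_Suc)
  then have "Q v = (1 / real (Suc n)) *\<^sub>R raise_hom P Q \<psi> (zmonom (Suc n) 0)"
    by (simp del: of_nat_Suc)
  moreover have "raise_hom P Q \<psi> (zmonom (Suc n) 0) \<in> Vhpp J gact kact (h + d) (int (Suc n))"
    using raise_hom_Khom[OF PQ \<psi>] unfolding Vhpp_int_eq by blast
  moreover have "int n + 1 = int (Suc n)"
    by simp
  ultimately show ?thesis
    by (simp only: Vhpp_scaleR)
qed

lemma Vhpp_lower:
  assumes PQ: "K_doublet d P Q" and "v \<in> Vhpp J gact kact h (int n)"
  shows "real n *\<^sub>R P v - Q (E 1 2 v) \<in> Vhpp J gact kact (h + d) (int n - 1)"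
proof -
  obtain \<psi> where \<psi>: "\<psi> \<in> Khom J kact h n" and v: "v = \<psi> (zmonom n 0)"
    using assms(2) by (auto simp: Vhpp_int_eq)
  have P: "clin J P" and Q: "clin J Q"
    using PQ by (simp_all add: K_doublet_def)
  have E12: "E 1 2 v = real n *\<^sub>R \<psi> (zmonom n 1)"
    unfolding v by (rule E12_Khom[OF \<psi>])
  show ?thesis
  proof (cases n)
    case 0
    then show ?thesis
      by (simp add: E12 Vhpp_def clin_simps[OF Q])
  next
    case (Suc m)
    have "lower_hom P Q \<psi> (zmonom m 0) = P v - Q (\<psi> (zmonom n 1))"
      by (simp add: lower_hom_def snd_mult_zmonom fst_mult_zmonom v Suc)
    then have "real n *\<^sub>R P v - Q (E 1 2 v) = real n *\<^sub>R lower_hom P Q \<psi> (zmonom m 0)"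
      by (simp add: E12 clin_simps[OF Q] scaleR_diff_right)
    moreover have "lower_hom P Q \<psi> (zmonom m 0) \<in> Vhpp J gact kact (h + d) (int m)"
      using lower_hom_Khom[OF PQ, of \<psi> h m] \<psi> Suc unfolding Vhpp_int_eq by auto
    moreover have "int n - 1 = int m"
      using Suc by simp
    ultimately show ?thesis
      by (simp only: Vhpp_scaleR)
  qed
qed

lemma gact_Z12: "gact Z12 w = 2 *\<^sub>R E 1 2 w"
  by (simp add: Z12_def gact_msc)

lemma cscale_shift_coefficient:
  "cscale J (1 / (2 * (of_int q + 1))) (2 *\<^sub>R w) = (1 / (real_of_int q + 1)) *\<^sub>R w"
proof -
  have "(1 / (2 * (of_int q + 1)) :: complex) = of_real (1 / (2 * (real_of_int q + 1)))"
    by simp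
  moreover have "1 / (2 * (real_of_int q + 1)) * 2 = 1 / (real_of_int q + 1)"
    by (cases "real_of_int q + 1 = 0") (simp_all add: field_simps)
  ultimately show ?thesis
    by (simp only: cscale_of_real scaleR_scaleR)
qed

lemma S_3_m1_eq: "S_3_m1 J gact q w = E 3 2 w + (1 / (real_of_int q + 1)) *\<^sub>R E 1 2 (E 3 1 w)"
  unfolding S_3_m1_def gact_Z12 cscale_shift_coefficient Z31_def Z32_def by (rule refl)

lemma S_m3_m1_eq: "S_m3_m1 J gact q w = E 1 3 w - (1 / (real_of_int q + 1)) *\<^sub>R E 1 2 (E 2 3 w)"
  unfolding S_m3_m1_def gact_Z12 cscale_shift_coefficient Z13_def Z23_def by (rule refl)

lemma S_3_m1_Vhpp:
  assumes v: "v \<in> Vhpp J gact kact h (int n)"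
  shows "S_3_m1 J gact (int n) v \<in> Vhpp J gact kact (h + 3) (int n - 1)"
proof -
  have "S_3_m1 J gact (int n) v = E 3 2 v + (1 / (real n + 1)) *\<^sub>R (E 3 1 (E 1 2 v) - E 3 2 v)"
    by (simp add: S_3_m1_eq E12_E31)
  also have "\<dots> = (- (1 / (real n + 1))) *\<^sub>R (real n *\<^sub>R gact (- Emat 3 2) v - E 3 1 (E 1 2 v))"
    unfolding affine_scaleR_eq[of "real n", simplified] by (simp add: gact_minus_mat algebra_simps)
  finally show ?thesis
    using Vhpp_scaleR[OF Vhpp_lower[OF K_doublet_E32_E31 v]] by (simp only:)
qed

lemma S_m3_m1_Vhpp:
  assumes v: "v \<in> Vhpp J gact kact h (int n)"
  shows "S_m3_m1 J gact (int n) v \<in> Vhpp J gact kact (h - 3) (int n - 1)"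
proof -
  have "S_m3_m1 J gact (int n) v = E 1 3 v + (1 / (real n + 1)) *\<^sub>R (- E 2 3 (E 1 2 v) - E 1 3 v)"
    by (simp add: S_m3_m1_eq E12_E23 algebra_simps)
  also have "\<dots> = (1 / (real n + 1)) *\<^sub>R (real n *\<^sub>R E 1 3 v - E 2 3 (E 1 2 v))"
    unfolding affine_scaleR_eq[of "real n", simplified] by simp
  finally show ?thesis
    using Vhpp_scaleR[OF Vhpp_lower[OF K_doublet_E13_E23 v]] by simp
qed

lemma E31_E23_commute_Vhpp: "v \<in> Vhpp J gact kact h (int n) \<Longrightarrow> E 3 1 (E 2 3 v) = E 2 3 (E 3 1 v)"
  by (simp add: E31_E23 E21_Vhpp)

lemma S_3_m1_S_m3_m1_diff:
  "S_3_m1 J gact (int n - 1) (S_m3_m1 J gact (int n) v) - S_m3_m1 J gact (int n - 1) (S_3_m1 J gact (int n) v)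
    = E 1 2 (- v - (1 / (real n + 1)) *\<^sub>R (E 3 2 (E 2 3 v) + E 1 3 (E 3 1 v))
        + (1 / real n) *\<^sub>R (E 3 1 (E 1 3 v) + E 2 3 (E 3 2 v))
        + (1 / real n * (1 / (real n + 1))) *\<^sub>R (E 2 3 (E 1 2 (E 3 1 v)) - E 3 1 (E 1 2 (E 2 3 v))))"
  by (simp add: S_3_m1_eq S_m3_m1_eq E32_E13 E32_E12 E13_E12 gact_linear algebra_simps)

lemma E32_E23_E13_E31_Vhpp:
  assumes v: "v \<in> Vhpp J gact kact h (int n)"
  shows "E 3 2 (E 2 3 v) + E 1 3 (E 3 1 v) = (E 3 1 (E 1 3 v) + E 2 3 (E 3 2 v)) - real n *\<^sub>R v"
proof -
  have "(Emat 3 3 - Emat 2 2) + (Emat 1 1 - Emat 3 3) = - (Emat 2 2 - Emat 1 1)"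
    by (simp add: algebra_simps)
  moreover have "Emat 3 3 - Emat 2 2 \<in> sl3" "Emat 1 1 - Emat 3 3 \<in> sl3" "Emat 2 2 - Emat 1 1 \<in> sl3"
    by (simp_all add: sl3_iff Emat_def)
  ultimately have "gact (Emat 3 3 - Emat 2 2) v + gact (Emat 1 1 - Emat 3 3) v = - real n *\<^sub>R v"
    using H_Vhpp[OF v] by (metis gact_add_mat gact_minus_mat scaleR_minus_left)
  then show ?thesis
    by (simp add: E32_E23 E13_E31 algebra_simps)
qed

lemma E23_E12_E31_Vhpp:
  assumes v: "v \<in> Vhpp J gact kact h (int n)"
  shows "E 2 3 (E 1 2 (E 3 1 v)) - E 3 1 (E 1 2 (E 2 3 v)) = real n *\<^sub>R v - (E 3 1 (E 1 3 v) + E 2 3 (E 3 2 v))"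
  by (simp add: E12_E31 E12_E23 E31_E23 E21_E12 E21_Vhpp[OF v] H_Vhpp[OF v] gact_linear algebra_simps)

lemma S_3_m1_S_m3_m1_commute_Vhpp:
  assumes v: "v \<in> Vhpp J gact kact h (int n)"
  shows "S_3_m1 J gact (int n - 1) (S_m3_m1 J gact (int n) v)
    = S_m3_m1 J gact (int n - 1) (S_3_m1 J gact (int n) v)"
proof (cases "n = 0")
  case True
  then have "S_m3_m1 J gact (int n) v = 0" "S_3_m1 J gact (int n) v = 0"
    using S_m3_m1_Vhpp[OF v] S_3_m1_Vhpp[OF v] by (simp_all add: Vhpp_def)
  then show ?thesis
    by (simp add: S_3_m1_eq S_m3_m1_eq gact_linear)
next
  case False
  define Y where "Y = E 3 1 (E 1 3 v) + E 2 3 (E 3 2 v)"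
  define k m where "k = 1 / (real n + 1)" and "m = 1 / real n"
  have "- v - k *\<^sub>R (Y - real n *\<^sub>R v) + m *\<^sub>R Y + (m * k) *\<^sub>R (real n *\<^sub>R v - Y) = 0"
  proof -
    have kn: "k * (real n + 1) = 1" and mn: "m * real n = 1"
      using False by (simp_all add: k_def m_def)
    have "k * real n + m * k * real n - 1 = (k * (real n + 1) - 1) + k * (m * real n - 1)"
      and "m - k - m * k = k * (m * real n - 1) - m * (k * (real n + 1) - 1)"
      by (simp_all add: algebra_simps)
    then have "k * real n + m * k * real n - 1 = 0" "m - k - m * k = 0"
      by (simp_all add: kn mn)
    then have "(k * real n + m * k * real n - 1) *\<^sub>R v + (m - k - m * k) *\<^sub>R Y = 0"
      by simp
    then show ?thesis
      by (simp add: algebra_simps)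
  qed
  moreover have "S_3_m1 J gact (int n - 1) (S_m3_m1 J gact (int n) v) - S_m3_m1 J gact (int n - 1) (S_3_m1 J gact (int n) v)
      = E 1 2 (- v - k *\<^sub>R (Y - real n *\<^sub>R v) + m *\<^sub>R Y + (m * k) *\<^sub>R (real n *\<^sub>R v - Y))"
    unfolding S_3_m1_S_m3_m1_diff E32_E23_E13_E31_Vhpp[OF v] E23_E12_E31_Vhpp[OF v] k_def m_def Y_def
    by (rule refl)
  ultimately show ?thesis
    by (simp add: gact_linear)
qed

end

theorem proposition6p1:
  fixes J :: "'v::real_normed_vector \<Rightarrow> 'v"
    and gact kact :: "cmat \<Rightarrow> 'v \<Rightarrow> 'v"
    and h p :: int
  assumes "gK_module J gact kact"
    and "p \<ge> 0" and "even (h - p)"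
  shows "(\<forall>v\<in>Vhpp J gact kact h p. S_3_1 gact v \<in> Vhpp J gact kact (h + 3) (p + 1))
       \<and> (\<forall>v\<in>Vhpp J gact kact h p. S_m3_1 gact v \<in> Vhpp J gact kact (h - 3) (p + 1))
       \<and> (\<forall>v\<in>Vhpp J gact kact h p. S_3_m1 J gact p v \<in> Vhpp J gact kact (h + 3) (p - 1))
       \<and> (\<forall>v\<in>Vhpp J gact kact h p. S_m3_m1 J gact p v \<in> Vhpp J gact kact (h - 3) (p - 1))
       \<and> (\<forall>v\<in>Vhpp J gact kact h p. S_3_1 gact (S_m3_1 gact v) = S_m3_1 gact (S_3_1 gact v))
       \<and> (\<forall>v\<in>Vhpp J gact kact h p.
            S_3_m1 J gact (p - 1) (S_m3_m1 J gact p v) = S_m3_m1 J gact (p - 1) (S_3_m1 J gact p v))"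
proof -
  interpret gK_mod J gact kact
    by (rule gK_mod.intro) (rule assms(1))
  obtain n where p: "p = int n"
    using assms(2) nonneg_int_cases by blast
  show ?thesis
    unfolding p S_3_1_def S_m3_1_def Z31_def Z23_def
    using Vhpp_raise[OF K_doublet_E32_E31, of _ h n] Vhpp_raise[OF K_doublet_E13_E23, of _ h n]
      S_3_m1_Vhpp S_m3_m1_Vhpp E31_E23_commute_Vhpp S_3_m1_S_m3_m1_commute_Vhpp
    by auto
qed

end
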